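(* Let $\mathcal{H}_S$ (system) and $\mathcal{H}_B$ (bath) be Hilbert spaces (with all traces below finite, e.g. finite-dimensional). Let $H_S(s)$, $s\in[0,t]$, be a (possibly time-dependent) self-adjoint system Hamiltonian, $H_B$ a time-independent self-adjoint bath Hamiltonian, and $U_t$ any unitary on $\mathcal{H}_S\otimes\mathcal{H}_B$. Fix $\beta_S,\beta_B>0$, put $\Delta\beta=\beta_B-\beta_S$, and set $Z_S(s)={\rm Tr}[e^{-\beta_S H_S(s)}]$, $\tau_S(s)=e^{-\beta_S H_S(s)}/Z_S(s)$, $Z_B={\rm Tr}[e^{-\beta_B H_B}]$, $\tau_B=e^{-\beta_B H_B}/Z_B$, $F_S(s)=-\beta_S^{-1}\ln Z_S(s)$, $\Delta F_S=F_S(t)-F_S(0)$. Let $\{|\epsilon\rangle\}$ be an orthonormal eigenbasis of $H_S(0)$ with eigenvalues $\epsilon$. Define $\Phi_t(\rho)={\rm Tr}_B[U_t(\rho\otimes\tau_B)U_t^\dagger]$, $\Delta\tilde E(\epsilon)={\rm Tr}[H_S(t)\Phi_t(|\epsilon\rangle\langle\epsilon|)]-\epsilon$, $\tilde Z_S(t)=\sum_\epsilon e^{-\beta_S{\rm Tr}[H_S(t)\Phi_t(|\epsilon\rangle\langle\epsilon|)]}$, $$\Theta_{SB}(t)=\sum_\epsilon \frac{e^{-\beta_S{\rm Tr}[H_S(t)\Phi_t(|\epsilon\rangle\langle\epsilon|)]}}{\tilde Z_S(t)}\,U_t(|\epsilon\rangle\langle\epsilon|\otimes\tau_B)U_t^\dagger,\qquad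 \tilde\rho_S(t)={\rm Tr}_B[\Theta_{SB}(t)],$$ $\langle\tilde Q\rangle_B={\rm Tr}[H_B\tau_B]-{\rm Tr}[(\mathbb{1}_S\otimes H_B)\Theta_{SB}(t)]$, and $\tilde W(\epsilon)=\Delta\tilde E(\epsilon)-\langle\tilde Q\rangle_B$. Writing $\langle f\rangle_{\tilde P}=\sum_\epsilon\frac{e^{-\beta_S\epsilon}}{Z_S(0)}f(\epsilon)$ and $\langle\tilde W\rangle=\langle\tilde W\rangle_{\tilde P}$, one has $$\langle e^{-\beta_S\tilde W}\rangle_{\tilde P}=e^{-\beta_S\Delta F_S}\,e^{-D[\Theta_{SB}(t)\|\tau_S(t)\otimes\tau_B]}\,e^{-\Delta\beta\,\langle\tilde Q\rangle_B},$$ and consequently $$\langle\tilde W\rangle\ \ge\ \Delta F_S+\beta_S^{-1}D[\tilde\rho_S(t)\|\tau_S(t)]+\frac{\Delta\beta}{\beta_S}\langle\tilde Q\rangle_B,$$ where $D[\rho\|\sigma]={\rm Tr}[\rho\ln\rho]-{\rm Tr}[\rho\ln\sigma]$ is the quantum relative entropy.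
   Context: Setting: system initially thermal at inverse temperature $\beta_S$, bath initially thermal at inverse temperature $\beta_B$; an initial energy measurement of the system yields $\epsilon$ with probability $e^{-\beta_S\epsilon}/Z_S(0)$, followed by joint evolution $U_t$ of $|\epsilon\rangle\langle\epsilon|\otimes\tau_B$. $\langle\tilde Q\rangle_B$ (guessed quantum heat) is a constant independent of $\epsilon$. *)

theory Defs
  imports "Jordan_Normal_Form.Matrix" "Jordan_Normal_Form.Conjugate"
begin

text \<open>System space C^n, bath space C^m; tensor product C^n (x) C^m = C^(n*m) with the
  Kronecker convention: basis index (i,j) corresponds to i*m + j.\<close>

definition adj :: "complex mat \<Rightarrow> complex mat" where
  "adj A = mat (dim_col A) (dim_row A) (\<lambda>(i,j). cnj (A $$ (j,i)))"

definition hermitian_mat :: "nat \<Rightarrow> complex mat \<Rightarrow> bool" where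
  "hermitian_mat n A \<longleftrightarrow> A \<in> carrier_mat n n \<and> adj A = A"

definition unitary_mat :: "nat \<Rightarrow> complex mat \<Rightarrow> bool" where
  "unitary_mat n U \<longleftrightarrow> U \<in> carrier_mat n n \<and> U * adj U = 1\<^sub>m n \<and> adj U * U = 1\<^sub>m n"

definition mtrace :: "complex mat \<Rightarrow> complex" where
  "mtrace A = (\<Sum>i<dim_row A. A $$ (i,i))"

definition hfun :: "(real \<Rightarrow> real) \<Rightarrow> complex mat \<Rightarrow> complex mat" where
  "hfun f A = (SOME B. \<exists>V d. unitary_mat (dim_row A) V \<and>
      A = V * mat_diag (dim_row A) (\<lambda>i. complex_of_real (d i)) * adj V \<and>
      B = V * mat_diag (dim_row A) (\<lambda>i. complex_of_real (f (d i))) * adj V)"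

definition mexp :: "complex mat \<Rightarrow> complex mat" where
  "mexp A = hfun exp A"

text \<open>Matrix logarithm; with Isabelle's convention ln 0 = 0 this realises 0 ln 0 = 0.\<close>
definition mln :: "complex mat \<Rightarrow> complex mat" where
  "mln A = hfun ln A"

definition rel_entropy :: "complex mat \<Rightarrow> complex mat \<Rightarrow> real" where
  "rel_entropy \<rho> \<sigma> = Re (mtrace (\<rho> * mln \<rho>) - mtrace (\<rho> * mln \<sigma>))"

definition kron :: "complex mat \<Rightarrow> complex mat \<Rightarrow> complex mat" where
  "kron A B = mat (dim_row A * dim_row B) (dim_col A * dim_col B)
     (\<lambda>(i,j). A $$ (i div dim_row B, j div dim_col B) * B $$ (i mod dim_row B, j mod dim_col B))"

definition ptrace_B :: "nat \<Rightarrow> complex mat \<Rightarrow> complex mat" where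
  "ptrace_B m M = mat (dim_row M div m) (dim_col M div m)
     (\<lambda>(i,k). \<Sum>j<m. M $$ (i*m + j, k*m + j))"

definition proj :: "complex vec \<Rightarrow> complex mat" where
  "proj v = mat (dim_vec v) (dim_vec v) (\<lambda>(i,j). v $ i * cnj (v $ j))"

definition part_fun :: "real \<Rightarrow> complex mat \<Rightarrow> real" where
  "part_fun \<beta> H = Re (mtrace (mexp (complex_of_real (- \<beta>) \<cdot>\<^sub>m H)))"

definition gibbs :: "real \<Rightarrow> complex mat \<Rightarrow> complex mat" where
  "gibbs \<beta> H = complex_of_real (1 / part_fun \<beta> H) \<cdot>\<^sub>m mexp (complex_of_real (- \<beta>) \<cdot>\<^sub>m H)"

definition msum :: "nat \<Rightarrow> nat \<Rightarrow> (nat \<Rightarrow> complex mat) \<Rightarrow> complex mat" where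
  "msum N K F = mat N N (\<lambda>(i,j). \<Sum>k<K. F k $$ (i,j))"

end

(* The guessed state Theta is the unitary image U (rho_0 (x) tau_B) U^dagger of a product state,
   where rho_0 carries the weights exp(-beta_S E(eps))/Z~ in the eigenbasis of H_S(0), with
   E(eps) = Tr[H_S(t) Phi_t(|eps><eps|)] and Z~ = Z~_S(t). Hence its entropy is that of rho_0
   plus that of tau_B, and since ln tau = -beta H - ln Z for a Gibbs state, the relative entropy
   D[Theta || tau_S(t) (x) tau_B] collapses to ln Z_S(t) - ln Z~ - beta_B <Q~>_B. The
   exponential average of W~ is Z~ exp(beta_S <Q~>_B) / Z_S(0), which gives the equality.
   For the inequality, Jensen gives beta_S <W~> >= -ln of that average, and the chain rule
   D[Theta || tau_S (x) tau_B] = D[rho_S || tau_S] + D[Theta || rho_S (x) tau_B] together with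
   Klein's inequality D >= 0 replaces the joint relative entropy by the reduced one. *)

theory Submission
  imports Defs "Jordan_Normal_Form.Spectral_Radius"
begin

abbreviation rdiag :: "nat \<Rightarrow> (nat \<Rightarrow> real) \<Rightarrow> complex mat" where
  "rdiag n d \<equiv> mat_diag n (\<lambda>i. complex_of_real (d i))"

lemma mat_diag_dims[simp]: "dim_row (mat_diag n f) = n" "dim_col (mat_diag n f) = n"
  by (simp_all add: mat_diag_def)

lemma mat_diag_cong: "(\<And>i. i < n \<Longrightarrow> f i = g i) \<Longrightarrow> mat_diag n f = mat_diag n g"
  by (rule eq_matI) (auto simp: mat_diag_def)

lemma smult_rdiag: "complex_of_real r \<cdot>\<^sub>m rdiag n h = rdiag n (\<lambda>i. r * h i)"
  by (rule eq_matI) (auto simp: mat_diag_def)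

lemma mult_carrier_mat_square[simp]:
  "A \<in> carrier_mat n n \<Longrightarrow> B \<in> carrier_mat n n \<Longrightarrow> A * B \<in> carrier_mat n n"
  by (rule mult_carrier_mat)

lemma assoc_mult_mat_dims:
  "dim_col A = dim_row B \<Longrightarrow> dim_col B = dim_row C \<Longrightarrow> A * B * C = A * (B * C)"
  by (rule assoc_mult_mat[of A "dim_row A" "dim_col A" B "dim_col B" C "dim_col C"]) auto

lemma index_mult_mat_sum:
  assumes "A \<in> carrier_mat a b" "B \<in> carrier_mat b c" "i < a" "j < c"
  shows "(A * B) $$ (i,j) = (\<Sum>l<b. A $$ (i,l) * B $$ (l,j))"
  using assms by (simp add: scalar_prod_def lessThan_atLeast0)

lemma cscalar_prod_sum: "(w :: complex vec) \<in> carrier_vec n \<Longrightarrow> v \<bullet>c w = (\<Sum>l<n. v $ l * cnj (w $ l))"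
  by (simp add: scalar_prod_def lessThan_atLeast0)

lemma cscalar_prod_swap:
  fixes v w :: "complex vec"
  assumes "v \<in> carrier_vec n" "w \<in> carrier_vec n"
  shows "w \<bullet>c v = cnj (v \<bullet>c w)"
  using assms by (simp add: cscalar_prod_sum[of _ n] cnj_sum mult.commute)

lemma adj_dims[simp]: "dim_row (adj A) = dim_col A" "dim_col (adj A) = dim_row A"
  by (auto simp: adj_def)

lemma adj_carrier[simp]: "A \<in> carrier_mat a b \<Longrightarrow> adj A \<in> carrier_mat b a"
  by (auto simp: adj_def)

lemma adj_index[simp]: "i < dim_col A \<Longrightarrow> j < dim_row A \<Longrightarrow> adj A $$ (i,j) = cnj (A $$ (j,i))"
  by (auto simp: adj_def)

lemma adj_adj[simp]: "adj (adj A) = A"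
  by (rule eq_matI) auto

lemma adj_mult:
  assumes "A \<in> carrier_mat a b" "B \<in> carrier_mat b c"
  shows "adj (A * B) = adj B * adj A"
proof (rule eq_matI)
  fix i j assume "i < dim_row (adj B * adj A)" "j < dim_col (adj B * adj A)"
  then show "adj (A * B) $$ (i,j) = (adj B * adj A) $$ (i,j)"
    using assms by (simp add: scalar_prod_def sum_conjugate mult.commute)
qed (use assms in auto)

lemma adj_rdiag[simp]: "adj (rdiag n d) = rdiag n d"
  by (rule eq_matI) (auto simp: mat_diag_def)

lemma adj_one[simp]: "adj (1\<^sub>m n) = 1\<^sub>m n"
  by (rule eq_matI) auto

lemma hermitian_matD:
  assumes "hermitian_mat n A"
  shows "A \<in> carrier_mat n n" "adj A = A"
  using assms by (auto simp: hermitian_mat_def)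

lemma hermitian_index_cnj:
  assumes "A \<in> carrier_mat n n" "adj A = A" "i < n" "j < n"
  shows "cnj (A $$ (i,j)) = A $$ (j,i)"
  using assms by (metis adj_index carrier_matD)

lemma hermitian_cscalar_prod:
  fixes x y :: "complex vec"
  assumes A: "A \<in> carrier_mat n n" "adj A = A" and xy: "x \<in> carrier_vec n" "y \<in> carrier_vec n"
  shows "(A *\<^sub>v x) \<bullet>c y = x \<bullet>c (A *\<^sub>v y)"
proof -
  have "(A *\<^sub>v x) \<bullet>c y = (\<Sum>i<n. \<Sum>j<n. A $$ (i,j) * x $ j * cnj (y $ i))"
    using A xy by (simp add: cscalar_prod_sum[of _ n] scalar_prod_def lessThan_atLeast0
        sum_distrib_right)
  also have "\<dots> = (\<Sum>j<n. \<Sum>i<n. x $ j * (cnj (A $$ (j,i)) * cnj (y $ i)))"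
    using hermitian_index_cnj[OF A] by (subst sum.swap) (simp add: mult_ac)
  also have "\<dots> = x \<bullet>c (A *\<^sub>v y)"
    using A xy by (simp add: cscalar_prod_sum[of _ n] scalar_prod_def lessThan_atLeast0
        sum_distrib_left cnj_sum)
  finally show ?thesis .
qed

lemma mtrace_eq_sum: "A \<in> carrier_mat n n \<Longrightarrow> mtrace A = (\<Sum>i<n. A $$ (i,i))"
  by (auto simp: mtrace_def)

lemma mtrace_mult_comm:
  assumes "A \<in> carrier_mat a b" "B \<in> carrier_mat b a"
  shows "mtrace (A * B) = mtrace (B * A)"
proof -
  have "mtrace (A * B) = (\<Sum>i<a. \<Sum>l<b. A $$ (i,l) * B $$ (l,i))"
    using assms by (simp add: mtrace_eq_sum[of _ a] scalar_prod_def lessThan_atLeast0)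
  also have "\<dots> = (\<Sum>l<b. \<Sum>i<a. B $$ (l,i) * A $$ (i,l))"
    by (subst sum.swap) (simp add: mult.commute)
  also have "\<dots> = mtrace (B * A)"
    using assms by (simp add: mtrace_eq_sum[of _ b] scalar_prod_def lessThan_atLeast0)
  finally show ?thesis .
qed

lemma mtrace_add: "A \<in> carrier_mat n n \<Longrightarrow> B \<in> carrier_mat n n \<Longrightarrow> mtrace (A + B) = mtrace A + mtrace B"
  by (simp add: mtrace_eq_sum[of _ n] sum.distrib)

lemma mtrace_smult: "A \<in> carrier_mat n n \<Longrightarrow> mtrace (c \<cdot>\<^sub>m A) = c * mtrace A"
  by (simp add: mtrace_eq_sum[of _ n] sum_distrib_left)

lemma mtrace_diag: "mtrace (mat_diag n f) = (\<Sum>i<n. f i)"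
  by (simp add: mtrace_eq_sum[of _ n] mat_diag_def)

lemma mtrace_mult_add: "X \<in> carrier_mat n n \<Longrightarrow> A \<in> carrier_mat n n \<Longrightarrow> B \<in> carrier_mat n n \<Longrightarrow>
  mtrace (X * (A + B)) = mtrace (X * A) + mtrace (X * B)"
  by (simp add: mult_add_distrib_mat[of _ n n] mtrace_add[of _ n])

lemma mtrace_mult_affine:
  assumes "X \<in> carrier_mat n n" "H \<in> carrier_mat n n"
  shows "mtrace (X * (a \<cdot>\<^sub>m H + b \<cdot>\<^sub>m 1\<^sub>m n)) = a * mtrace (X * H) + b * mtrace X"
proof -
  have "X * (a \<cdot>\<^sub>m H + b \<cdot>\<^sub>m 1\<^sub>m n) = X * (a \<cdot>\<^sub>m H) + X * (b \<cdot>\<^sub>m 1\<^sub>m n)"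
    using assms by (intro mult_add_distrib_mat[of _ n n]) auto
  then show ?thesis
    using assms by (simp add: mtrace_add[of _ n] mult_smult_distrib[of _ n n] mtrace_smult[of _ n]
        mult_smult_distrib[of X n n "1\<^sub>m n" n])
qed

lemma mtrace_mult_smult: "X \<in> carrier_mat n n \<Longrightarrow> A \<in> carrier_mat n n \<Longrightarrow>
  mtrace (X * (c \<cdot>\<^sub>m A)) = c * mtrace (X * A)"
  by (simp add: mult_smult_distrib[of _ n n] mtrace_smult[of _ n])

lemma unitary_matD:
  assumes "unitary_mat n U"
  shows "U \<in> carrier_mat n n" "U * adj U = 1\<^sub>m n" "adj U * U = 1\<^sub>m n"
  using assms by (auto simp: unitary_mat_def)

lemma unitary_matI:
  assumes "U \<in> carrier_mat n n" "adj U * U = 1\<^sub>m n"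
  shows "unitary_mat n U"
  using assms mat_mult_left_right_inverse[of "adj U" n U] by (auto simp: unitary_mat_def)

lemma unitary_mat_adj: "unitary_mat n U \<Longrightarrow> unitary_mat n (adj U)"
  by (auto simp: unitary_mat_def)

lemma unitary_mat_one: "unitary_mat n (1\<^sub>m n)"
  by (auto simp: unitary_mat_def)

lemma unitary_cancel:
  assumes "unitary_mat n V" "dim_row Y = n"
  shows "adj V * (V * Y) = Y" "V * (adj V * Y) = Y"
proof -
  note v = unitary_matD[OF assms(1)]
  have "(adj V * V) * Y = adj V * (V * Y)"
    by (rule assoc_mult_mat[of _ n n _ n _ "dim_col Y"]) (use v assms in auto)
  then show "adj V * (V * Y) = Y" using v assms by simp
  have "(V * adj V) * Y = V * (adj V * Y)"
    by (rule assoc_mult_mat[of _ n n _ n _ "dim_col Y"]) (use v assms in auto)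
  then show "V * (adj V * Y) = Y" using v assms by simp
qed

lemma unitary_mat_mult:
  assumes "unitary_mat n U" "unitary_mat n V"
  shows "unitary_mat n (U * V)"
proof -
  note u = unitary_matD[OF assms(1)] and v = unitary_matD[OF assms(2)]
  have "adj (U * V) * (U * V) = adj V * (adj U * (U * V))"
    using u v by (simp add: adj_mult[of U n n V n] assoc_mult_mat[of _ n n _ n _ n])
  also have "\<dots> = 1\<^sub>m n" using u v assms by (simp add: unitary_cancel)
  finally show ?thesis using u v by (intro unitary_matI) auto
qed

lemma unitary_rows:
  assumes "unitary_mat n V" "a < n" "b < n"
  shows "(\<Sum>r<n. V $$ (a,r) * cnj (V $$ (b,r))) = (if a = b then 1 else 0)"
proof -
  note v = unitary_matD[OF assms(1)]
  have "(\<Sum>r<n. V $$ (a,r) * cnj (V $$ (b,r))) = (V * adj V) $$ (a,b)"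
    using v(1) assms by (subst index_mult_mat_sum[of _ n n _ n]) auto
  also have "\<dots> = 1\<^sub>m n $$ (a,b)" by (simp only: v(2))
  finally show ?thesis using assms by simp
qed

lemma unitary_cols:
  assumes "unitary_mat n V" "a < n" "b < n"
  shows "(\<Sum>r<n. cnj (V $$ (r,a)) * V $$ (r,b)) = (if a = b then 1 else 0)"
proof -
  note v = unitary_matD[OF assms(1)]
  have "(\<Sum>r<n. cnj (V $$ (r,a)) * V $$ (r,b)) = (adj V * V) $$ (a,b)"
    using v(1) assms by (subst index_mult_mat_sum[of _ n n _ n]) auto
  also have "\<dots> = 1\<^sub>m n $$ (a,b)" by (simp only: v(3))
  finally show ?thesis using assms by simp
qed

lemma index_unitary_conj_rdiag:
  assumes "V \<in> carrier_mat n n" "a < n" "b < n"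
  shows "(V * rdiag n d * adj V) $$ (a,b) = (\<Sum>r<n. V $$ (a,r) * complex_of_real (d r) * cnj (V $$ (b,r)))"
proof -
  have "V * rdiag n d = mat n n (\<lambda>(i,j). V $$ (i,j) * complex_of_real (d j))"
    using assms by (simp add: mat_diag_mult_right[of V n n])
  then show ?thesis using assms by (simp add: scalar_prod_def lessThan_atLeast0)
qed

lemma unitary_conj_rdiag_carrier[simp]:
  "V \<in> carrier_mat n n \<Longrightarrow> V * rdiag n d * adj V \<in> carrier_mat n n"
  by (metis adj_carrier mat_diag_dim mult_carrier_mat)

lemma adj_unitary_conj_rdiag[simp]:
  assumes "V \<in> carrier_mat n n"
  shows "adj (V * rdiag n d * adj V) = V * rdiag n d * adj V"
proof -
  have "adj (V * rdiag n d * adj V) = adj (adj V) * adj (V * rdiag n d)"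
    using assms by (intro adj_mult[of _ n n _ n]) auto
  also have "\<dots> = V * (rdiag n d * adj V)"
    using assms by (simp add: adj_mult[of _ n n _ n])
  finally show ?thesis using assms by (simp add: assoc_mult_mat_dims)
qed

lemma unitary_conj_rdiag_one:
  assumes "unitary_mat n V"
  shows "V * rdiag n (\<lambda>_. 1) * adj V = 1\<^sub>m n"
  using unitary_matD[OF assms] by simp

lemma smult_unitary_conj_rdiag:
  assumes "V \<in> carrier_mat n n"
  shows "complex_of_real r \<cdot>\<^sub>m (V * rdiag n d * adj V) = V * rdiag n (\<lambda>i. r * d i) * adj V"
proof -
  have "complex_of_real r \<cdot>\<^sub>m (V * rdiag n d * adj V) = V * (complex_of_real r \<cdot>\<^sub>m rdiag n d) * adj V"
    using assms by (simp add: mult_smult_distrib[of _ n n _ n] mult_smult_assoc_mat[of _ n n _ n])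
  then show ?thesis by (simp only: smult_rdiag)
qed

lemma unitary_conj_rdiag_add:
  assumes V: "V \<in> carrier_mat n n"
  shows "V * rdiag n (\<lambda>i. a i + b i) * adj V = V * rdiag n a * adj V + V * rdiag n b * adj V"
proof (rule eq_matI)
  fix i j assume "i < dim_row (V * rdiag n a * adj V + V * rdiag n b * adj V)"
    "j < dim_col (V * rdiag n a * adj V + V * rdiag n b * adj V)"
  then have ij: "i < n" "j < n" using V by auto
  show "(V * rdiag n (\<lambda>i. a i + b i) * adj V) $$ (i,j) = (V * rdiag n a * adj V + V * rdiag n b * adj V) $$ (i,j)"
    using ij V by (subst index_unitary_conj_rdiag[OF V ij])
      (simp add: index_unitary_conj_rdiag[OF V ij] sum.distrib algebra_simps del: index_mult_mat(1))
qed (use V in auto)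

lemma unitary_conj_rdiag_affine:
  assumes V: "unitary_mat n V"
  shows "V * rdiag n (\<lambda>i. a * u i + b) * adj V
       = complex_of_real a \<cdot>\<^sub>m (V * rdiag n u * adj V) + complex_of_real b \<cdot>\<^sub>m 1\<^sub>m n"
proof -
  note v = unitary_matD[OF V]
  have "V * rdiag n (\<lambda>i. a * u i + b) * adj V = V * rdiag n (\<lambda>i. a * u i) * adj V + V * rdiag n (\<lambda>i. b * 1) * adj V"
    using unitary_conj_rdiag_add[OF v(1), of "\<lambda>i. a * u i" "\<lambda>i. b * 1"] by simp
  then show ?thesis
    using v by (simp only: smult_unitary_conj_rdiag[symmetric] unitary_conj_rdiag_one[OF V])
qed

lemma mtrace_unitary_conj:
  assumes "unitary_mat n V" "X \<in> carrier_mat n n"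
  shows "mtrace (V * X * adj V) = mtrace X"
proof -
  note v = unitary_matD[OF assms(1)]
  have "mtrace (V * X * adj V) = mtrace (adj V * (V * X))"
    using v assms by (intro mtrace_mult_comm[of _ n n]) auto
  also have "adj V * (V * X) = X" using v assms by (simp add: unitary_cancel)
  finally show ?thesis .
qed

lemma mtrace_unitary_conj_rdiag:
  "unitary_mat n V \<Longrightarrow> mtrace (V * rdiag n d * adj V) = complex_of_real (\<Sum>i<n. d i)"
  by (simp add: mtrace_unitary_conj unitary_matD mtrace_diag)

lemma unitary_conj_mult:
  assumes V: "unitary_mat n V" and "X \<in> carrier_mat n n" "Y \<in> carrier_mat n n"
  shows "V * X * adj V * (V * Y * adj V) = V * (X * Y) * adj V"
proof -
  note v = unitary_matD[OF V]
  have "V * X * adj V * (V * Y * adj V) = V * X * (adj V * (V * (Y * adj V)))"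
    using v assms by (simp add: assoc_mult_mat_dims)
  also have "adj V * (V * (Y * adj V)) = Y * adj V" using v assms by (simp add: unitary_cancel)
  finally show ?thesis using v assms by (simp add: assoc_mult_mat_dims)
qed

lemma unitary_conj_rdiag_mult:
  "unitary_mat n V \<Longrightarrow>
    V * rdiag n d * adj V * (V * rdiag n e * adj V) = V * rdiag n (\<lambda>i. d i * e i) * adj V"
  by (simp add: unitary_conj_mult unitary_matD)

lemma mtrace_mult_unitary_conj_rdiag:
  "unitary_mat n V \<Longrightarrow>
    mtrace (V * rdiag n d * adj V * (V * rdiag n e * adj V)) = complex_of_real (\<Sum>i<n. d i * e i)"
  by (simp only: unitary_conj_rdiag_mult mtrace_unitary_conj_rdiag)

subsection \<open>Spectral theorem for Hermitian matrices\<close>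

definition orthonormal :: "nat \<Rightarrow> nat \<Rightarrow> (nat \<Rightarrow> complex vec) \<Rightarrow> bool" where
  "orthonormal n k u \<longleftrightarrow> (\<forall>i<k. u i \<in> carrier_vec n) \<and>
     (\<forall>i<k. \<forall>j<k. u i \<bullet>c u j = (if i = j then 1 else 0))"

lemma exists_orthogonal_nonzero:
  fixes u :: "nat \<Rightarrow> complex vec"
  assumes "k < n" "\<And>i. i < k \<Longrightarrow> u i \<in> carrier_vec n"
  obtains v where "v \<in> carrier_vec n" "v \<noteq> 0\<^sub>v n" "\<And>i. i < k \<Longrightarrow> v \<bullet>c u i = 0"
proof -
  define f where "f = (\<lambda>i. if i < k then conjugate (u i) else 0\<^sub>v n)"
  define M where "M = mat\<^sub>r n n f"
  have "M = mat\<^sub>r n n (\<lambda>i. if i = n - 1 then 0\<^sub>v n else f i)"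
    unfolding M_def f_def using assms(1) by (intro arg_cong[where f="mat\<^sub>r n n"]) auto
  also have "det \<dots> = 0"
    by (rule det_row_0) (use assms in \<open>auto simp: f_def\<close>)
  finally obtain v where v: "v \<in> carrier_vec n" "v \<noteq> 0\<^sub>v n" "M *\<^sub>v v = 0\<^sub>v n"
    using det_0_iff_vec_prod_zero[of M n] M_def by auto
  have "v \<bullet>c u i = 0" if "i < k" for i
  proof -
    have "conjugate (u i) \<bullet> v = (M *\<^sub>v v) $ i"
      using that assms unfolding M_def f_def by simp
    then show ?thesis using conjugate_vec_sprod_comm[of v n "u i"] v assms that by simp
  qed
  then show ?thesis using that v by blast
qed

lemma exists_unit_multiple:
  fixes v :: "complex vec"
  assumes "v \<in> carrier_vec n" "v \<noteq> 0\<^sub>v n"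
  obtains c where "(c \<cdot>\<^sub>v v) \<bullet>c (c \<cdot>\<^sub>v v) = 1"
proof -
  have "v \<bullet>c v > 0" using assms by simp
  then have re: "Re (v \<bullet>c v) > 0" "Im (v \<bullet>c v) = 0" by (auto simp: less_complex_def)
  define r where "r = Re (v \<bullet>c v)"
  have r: "v \<bullet>c v = complex_of_real r" "r > 0" using re unfolding r_def by (auto simp: complex_eq_iff)
  define c where "c = complex_of_real (1 / sqrt r)"
  have "(c \<cdot>\<^sub>v v) \<bullet>c (c \<cdot>\<^sub>v v) = c * cnj c * (v \<bullet>c v)"
    using assms by (simp add: cscalar_prod_sum[of _ n] sum_distrib_left mult_ac)
  also have "\<dots> = 1" using r unfolding c_def by (simp add: field_simps flip: of_real_mult)
  finally show ?thesis using that by blast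
qed

lemma orthonormal_insert:
  assumes u: "orthonormal n k u" and w: "w \<in> carrier_vec n" "w \<bullet>c w = 1"
    and orth: "\<And>i. i < k \<Longrightarrow> w \<bullet>c u i = 0"
  shows "orthonormal n (Suc k) (u(k := w))"
proof -
  have "u i \<bullet>c w = 0" if "i < k" for i
    using cscalar_prod_swap[of w n "u i"] orth[OF that] u w(1) that by (simp add: orthonormal_def)
  then show ?thesis using u w orth unfolding orthonormal_def by (auto simp: less_Suc_eq)
qed

lemma orthonormal_extend:
  assumes "orthonormal n k u" "k < n"
  obtains w where "orthonormal n (Suc k) (u(k := w))"
proof -
  have uc: "\<And>i. i < k \<Longrightarrow> u i \<in> carrier_vec n" using assms by (auto simp: orthonormal_def)
  obtain v where v: "v \<in> carrier_vec n" "v \<noteq> 0\<^sub>v n" "\<And>i. i < k \<Longrightarrow> v \<bullet>c u i = 0"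
    using exists_orthogonal_nonzero[of k n u, OF assms(2) uc] by blast
  obtain c where c: "(c \<cdot>\<^sub>v v) \<bullet>c (c \<cdot>\<^sub>v v) = 1" using exists_unit_multiple[OF v(1,2)] .
  have "(c \<cdot>\<^sub>v v) \<bullet>c u i = 0" if "i < k" for i
    using uc[OF that] v(1) v(3)[OF that] by (simp add: cscalar_prod_sum[of _ n] sum_distrib_left[symmetric] mult.assoc)
  then show ?thesis using that orthonormal_insert[OF assms(1) _ c] v(1) by simp
qed

lemma unitary_mat_of_orthonormal:
  assumes "orthonormal n n u"
  shows "unitary_mat n (mat n n (\<lambda>(a,k). u k $ a))" "\<And>k. k < n \<Longrightarrow> col (mat n n (\<lambda>(a,k). u k $ a)) k = u k"
proof -
  define W where "W = mat n n (\<lambda>(a,k). u k $ a)"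
  have u: "\<And>i. i < n \<Longrightarrow> u i \<in> carrier_vec n"
    "\<And>i j. i < n \<Longrightarrow> j < n \<Longrightarrow> u i \<bullet>c u j = (if i = j then 1 else 0)"
    using assms by (auto simp: orthonormal_def)
  have "adj W * W = 1\<^sub>m n"
  proof (rule eq_matI)
    fix i j assume ij: "i < dim_row (1\<^sub>m n)" "j < dim_col (1\<^sub>m n)"
    have "(adj W * W) $$ (i,j) = u j \<bullet>c u i"
      using ij u(1)[of i] u(1)[of j] unfolding W_def by (simp add: scalar_prod_def cscalar_prod_sum[of _ n] lessThan_atLeast0 mult.commute)
    then show "(adj W * W) $$ (i,j) = 1\<^sub>m n $$ (i,j)" using ij u(2) by auto
  qed (auto simp: W_def)
  then show "unitary_mat n W" by (intro unitary_matI) (auto simp: W_def)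
  show "col W k = u k" if "k < n" for k
    using u(1)[OF that] that unfolding W_def by (intro eq_vecI) auto
qed

lemma orthonormal_unitary_completion:
  assumes "orthonormal n k u" "k \<le> n"
  shows "\<exists>W. unitary_mat n W \<and> (\<forall>i<k. col W i = u i)"
  using assms
proof (induction "n - k" arbitrary: k u)
  case 0
  then have "k = n" by simp
  then show ?case using unitary_mat_of_orthonormal 0 by blast
next
  case (Suc d)
  then have "k < n" by simp
  then obtain w where w: "orthonormal n (Suc k) (u(k := w))" using orthonormal_extend Suc(3) by blast
  have "d = n - Suc k" "Suc k \<le> n" using Suc(2) by auto
  then obtain W where "unitary_mat n W" "\<forall>i<Suc k. col W i = (u(k := w)) i"
    using Suc(1) w by blast
  then show ?case by (intro exI[of _ W]) auto
qed

lemma orthonormal_cols: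
  assumes "unitary_mat n W"
  shows "orthonormal n n (col W)"
proof -
  note w = unitary_matD[OF assms]
  have "col W i \<bullet>c col W j = (if i = j then 1 else 0)" if "i < n" "j < n" for i j
  proof -
    have "col W i \<bullet>c col W j = (\<Sum>r<n. cnj (W $$ (r,j)) * W $$ (r,i))"
      using that w by (simp add: cscalar_prod_sum[of _ n] mult.commute)
    then show ?thesis using unitary_cols[OF assms that(2,1)] by auto
  qed
  then show ?thesis using w by (auto simp: orthonormal_def)
qed

lemma hermitian_eigenvalue_real:
  assumes A: "A \<in> carrier_mat n n" "adj A = A"
    and x: "x \<in> carrier_vec n" "x \<noteq> 0\<^sub>v n" and eig: "A *\<^sub>v x = \<mu> \<cdot>\<^sub>v x"
  shows "\<mu> = complex_of_real (Re \<mu>)"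
proof -
  have "\<mu> * (x \<bullet>c x) = cnj \<mu> * (x \<bullet>c x)"
    using hermitian_cscalar_prod[OF A x(1) x(1)] x(1) unfolding eig
    by (simp add: conjugate_smult_vec)
  moreover have "x \<bullet>c x \<noteq> 0" using x by simp
  ultimately have "cnj \<mu> = \<mu>" by simp
  then have "Im \<mu> = 0" by (auto simp: complex_eq_iff)
  then show ?thesis by (simp add: complex_eq_iff)
qed

lemma sum_lessThan_add_split: "(\<Sum>j<k + (d::nat). f j) = (\<Sum>j<k. f j) + (\<Sum>b<d. f (k + b))"
  by (induction d) (auto simp: add.assoc)

lemma block_lower_triangular_eigenvector:
  fixes B :: "complex mat"
  assumes B: "B \<in> carrier_mat n n" and k: "k < n"
    and upper: "\<And>i j. i < k \<Longrightarrow> k \<le> j \<Longrightarrow> j < n \<Longrightarrow> B $$ (i,j) = 0"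
  obtains y \<mu> where "y \<in> carrier_vec n" "y \<noteq> 0\<^sub>v n" "B *\<^sub>v y = \<mu> \<cdot>\<^sub>v y" "\<And>i. i < k \<Longrightarrow> y $ i = 0"
proof -
  define C where "C = mat (n - k) (n - k) (\<lambda>(a,b). B $$ (k + a, k + b))"
  have Cc: "C \<in> carrier_mat (n - k) (n - k)" unfolding C_def by simp
  obtain \<mu> where "eigenvalue C \<mu>" using spectrum_non_empty[OF Cc] k unfolding spectrum_def by auto
  then obtain z where z: "z \<in> carrier_vec (n - k)" "z \<noteq> 0\<^sub>v (n - k)" "C *\<^sub>v z = \<mu> \<cdot>\<^sub>v z"
    unfolding eigenvalue_def eigenvector_def using Cc by auto
  define y where "y = vec n (\<lambda>i. if i < k then 0 else z $ (i - k))"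
  have yc: "y \<in> carrier_vec n" unfolding y_def by simp
  have "B *\<^sub>v y = \<mu> \<cdot>\<^sub>v y"
  proof (rule eq_vecI)
    fix i assume "i < dim_vec (\<mu> \<cdot>\<^sub>v y)"
    then have i: "i < n" unfolding y_def by simp
    have "(B *\<^sub>v y) $ i = (\<Sum>j<k + (n - k). B $$ (i,j) * y $ j)"
      using i B yc k by (simp add: scalar_prod_def lessThan_atLeast0)
    also have "\<dots> = (\<Sum>b<n - k. B $$ (i, k + b) * z $ b)"
      unfolding sum_lessThan_add_split y_def using k by simp
    also have "\<dots> = (\<mu> \<cdot>\<^sub>v y) $ i"
    proof (cases "i < k")
      case True
      then show ?thesis using upper i unfolding y_def by simp
    next
      case False
      then have "(C *\<^sub>v z) $ (i - k) = (\<Sum>b<n - k. B $$ (i, k + b) * z $ b)"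
        using i z(1) Cc unfolding C_def by (simp add: scalar_prod_def lessThan_atLeast0)
      then show ?thesis using z(1,3) False i unfolding y_def by simp
    qed
    finally show "(B *\<^sub>v y) $ i = (\<mu> \<cdot>\<^sub>v y) $ i" .
  qed (use B in \<open>simp add: y_def\<close>)
  moreover have "y \<noteq> 0\<^sub>v n"
  proof
    assume y0: "y = 0\<^sub>v n"
    have "z $ b = 0" if "b < n - k" for b
    proof -
      have "y $ (k + b) = 0" using y0 that by simp
      then show ?thesis using that by (simp add: y_def)
    qed
    then have "z = 0\<^sub>v (n - k)" using z(1) by (intro eq_vecI) auto
    then show False using z(2) by simp
  qed
  moreover have "y $ i = 0" if "i < k" for i using that k unfolding y_def by simp
  ultimately show ?thesis using that yc by blast
qed

lemma exists_eigenvector_orthogonal: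
  assumes A: "A \<in> carrier_mat n n" "adj A = A" and W: "unitary_mat n W" and k: "k < n"
    and eig: "\<And>i. i < k \<Longrightarrow> A *\<^sub>v col W i = complex_of_real (d i) \<cdot>\<^sub>v col W i"
  obtains x \<mu> where "x \<in> carrier_vec n" "x \<noteq> 0\<^sub>v n" "A *\<^sub>v x = \<mu> \<cdot>\<^sub>v x"
    "\<And>i. i < k \<Longrightarrow> x \<bullet>c col W i = 0"
proof -
  note w = unitary_matD[OF W] and on = orthonormal_cols[OF W, unfolded orthonormal_def]
  define B where "B = adj W * (A * W)"
  have Bc: "B \<in> carrier_mat n n" unfolding B_def using A w by auto
  have "B $$ (i,j) = 0" if "i < k" "k \<le> j" "j < n" for i j
  proof -
    have "B $$ (i,j) = (\<Sum>l<n. cnj (W $$ (l,i)) * (A * W) $$ (l,j))"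
      using that k A w unfolding B_def by (subst index_mult_mat_sum[of _ n n _ n]) auto
    also have "\<dots> = (A *\<^sub>v col W j) \<bullet>c col W i"
      using that k A w by (subst cscalar_prod_sum[of _ n]) (auto simp: mult.commute)
    also have "\<dots> = col W j \<bullet>c (complex_of_real (d i) \<cdot>\<^sub>v col W i)"
      using hermitian_cscalar_prod[OF A, of "col W j" "col W i"] eig[OF that(1)] that k w
      by (simp add: carrier_vecI)
    also have "\<dots> = 0" using that k on by (simp add: conjugate_smult_vec)
    finally show ?thesis .
  qed
  then obtain y \<mu> where y: "y \<in> carrier_vec n" "y \<noteq> 0\<^sub>v n" "B *\<^sub>v y = \<mu> \<cdot>\<^sub>v y"
    "\<And>i. i < k \<Longrightarrow> y $ i = 0"
    using block_lower_triangular_eigenvector[OF Bc k] by blast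
  define x where "x = W *\<^sub>v y"
  have xc: "x \<in> carrier_vec n" using w y unfolding x_def by simp
  have WB: "W * B = A * W" using unitary_cancel(2)[OF W, of "A * W"] A unfolding B_def by simp
  have "A *\<^sub>v x = (A * W) *\<^sub>v y"
    using A w y unfolding x_def by (simp add: assoc_mult_mat_vec[of _ n n _ n])
  also have "\<dots> = W *\<^sub>v (B *\<^sub>v y)"
    unfolding WB[symmetric] using Bc w y by (simp add: assoc_mult_mat_vec[of _ n n _ n])
  finally have Ax: "A *\<^sub>v x = \<mu> \<cdot>\<^sub>v x" using w y unfolding x_def by (simp add: mult_mat_vec)
  have Wx: "adj W *\<^sub>v x = y"
    using w y unfolding x_def by (simp flip: assoc_mult_mat_vec[of _ n n _ n])
  then have "x \<noteq> 0\<^sub>v n" using y(2) w by auto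
  moreover have "x \<bullet>c col W i = 0" if "i < k" for i
  proof -
    have "x \<bullet>c col W i = (adj W *\<^sub>v x) $ i"
      using that k w xc by (simp add: cscalar_prod_sum[of _ n] scalar_prod_def lessThan_atLeast0 mult.commute)
    then show ?thesis using Wx y(4) that by simp
  qed
  ultimately show ?thesis using that xc Ax by blast
qed

lemma spectral_step:
  assumes A: "A \<in> carrier_mat n n" "adj A = A" and W: "unitary_mat n W" and k: "k < n"
    and eig: "\<And>i. i < k \<Longrightarrow> A *\<^sub>v col W i = complex_of_real (d i) \<cdot>\<^sub>v col W i"
  shows "\<exists>W' d'. unitary_mat n W' \<and> (\<forall>i<Suc k. A *\<^sub>v col W' i = complex_of_real (d' i) \<cdot>\<^sub>v col W' i)"
proof -
  obtain x \<mu> where x: "x \<in> carrier_vec n" "x \<noteq> 0\<^sub>v n" "A *\<^sub>v x = \<mu> \<cdot>\<^sub>v x"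
    and orth: "\<And>i. i < k \<Longrightarrow> x \<bullet>c col W i = 0"
    using exists_eigenvector_orthogonal[OF A W k eig] by blast
  have \<mu>: "\<mu> = complex_of_real (Re \<mu>)" by (rule hermitian_eigenvalue_real[OF A x])
  obtain c where c: "(c \<cdot>\<^sub>v x) \<bullet>c (c \<cdot>\<^sub>v x) = 1" using exists_unit_multiple[OF x(1,2)] .
  have "(c \<cdot>\<^sub>v x) \<bullet>c col W i = 0" if "i < k" for i
    using that k x(1) orth[OF that] unitary_matD(1)[OF W]
    by (simp add: cscalar_prod_sum[of _ n] sum_distrib_left[symmetric] mult.assoc)
  moreover have "orthonormal n k (col W)"
    using orthonormal_cols[OF W] k by (simp add: orthonormal_def)
  ultimately have "orthonormal n (Suc k) ((col W)(k := c \<cdot>\<^sub>v x))"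
    using orthonormal_insert c x(1) by simp
  then obtain W' where W': "unitary_mat n W'" "\<forall>i<Suc k. col W' i = ((col W)(k := c \<cdot>\<^sub>v x)) i"
    using orthonormal_unitary_completion[OF _ Suc_leI[OF k]] by blast
  have "A *\<^sub>v (c \<cdot>\<^sub>v x) = \<mu> \<cdot>\<^sub>v (c \<cdot>\<^sub>v x)"
    using A x by (simp add: mult_mat_vec smult_smult_assoc mult.commute)
  then have "\<forall>i<Suc k. A *\<^sub>v col W' i = complex_of_real ((d(k := Re \<mu>)) i) \<cdot>\<^sub>v col W' i"
    using W'(2) eig \<mu> by (auto simp: less_Suc_eq)
  then show ?thesis using W'(1) by blast
qed

theorem spectral_decomposition:
  assumes "hermitian_mat n A"
  obtains V d where "unitary_mat n V" "A = V * rdiag n d * adj V"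
proof -
  note A = hermitian_matD[OF assms]
  have "\<exists>W d. unitary_mat n W \<and> (\<forall>i<k. A *\<^sub>v col W i = complex_of_real (d i) \<cdot>\<^sub>v col W i)"
    if "k \<le> n" for k
    using that
  proof (induction k)
    case 0
    then show ?case using unitary_mat_one by blast
  next
    case (Suc k)
    then obtain W d where "unitary_mat n W" "\<forall>i<k. A *\<^sub>v col W i = complex_of_real (d i) \<cdot>\<^sub>v col W i"
      by auto
    then show ?case using spectral_step[OF A, of W k d] Suc(2) by auto
  qed
  then obtain W d where W: "unitary_mat n W"
    and eig: "\<forall>i<n. A *\<^sub>v col W i = complex_of_real (d i) \<cdot>\<^sub>v col W i"
    by blast
  note w = unitary_matD[OF W]
  have "A * W = W * rdiag n d"
  proof (rule eq_matI)
    fix a i assume "a < dim_row (W * rdiag n d)" "i < dim_col (W * rdiag n d)"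
    then have ai: "a < n" "i < n" using w by auto
    have "(A * W) $$ (a,i) = (A *\<^sub>v col W i) $ a" using ai A w by simp
    also have "\<dots> = (W * rdiag n d) $$ (a,i)" using eig ai w
      by (simp add: mat_diag_mult_right[of W n n] mult.commute)
    finally show "(A * W) $$ (a,i) = (W * rdiag n d) $$ (a,i)" .
  qed (use A w in auto)
  then have "A * W * adj W = W * rdiag n d * adj W" by simp
  then have "A = W * rdiag n d * adj W"
    using A w by (simp add: assoc_mult_mat[of _ n n _ n _ n])
  then show ?thesis using that W by blast
qed

subsection \<open>Functional calculus\<close>

lemma rdiag_intertwine_fun:
  assumes M: "M \<in> carrier_mat n n" and comm: "rdiag n a * M = M * rdiag n b"
  shows "rdiag n (\<lambda>i. f (a i)) * M = M * rdiag n (\<lambda>i. f (b i))"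
proof (rule eq_matI)
  fix i j assume "i < dim_row (M * rdiag n (\<lambda>i. f (b i)))" "j < dim_col (M * rdiag n (\<lambda>i. f (b i)))"
  then have ij: "i < n" "j < n" using M by auto
  have "complex_of_real (a i) * M $$ (i,j) = M $$ (i,j) * complex_of_real (b j)"
    using arg_cong[OF comm, of "\<lambda>X. X $$ (i,j)"] ij M
    by (simp add: mat_diag_mult_left[of M n n] mat_diag_mult_right[of M n n])
  then have "M $$ (i,j) = 0 \<or> a i = b j" by (auto simp: mult.commute)
  then show "(rdiag n (\<lambda>i. f (a i)) * M) $$ (i,j) = (M * rdiag n (\<lambda>i. f (b i))) $$ (i,j)"
    using ij M by (auto simp: mat_diag_mult_left[of M n n] mat_diag_mult_right[of M n n])
qed (use M in auto)

text \<open>\<^const>\<open>hfun\<close> picks some spectral decomposition; the result does not depend on the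
  choice because two decompositions are intertwined by a unitary, which then also intertwines
  every function of the eigenvalues.\<close>

lemma hfun_unitary_conj_rdiag:
  assumes V: "unitary_mat n V"
  shows "hfun f (V * rdiag n d * adj V) = V * rdiag n (\<lambda>i. f (d i)) * adj V"
proof -
  note v = unitary_matD[OF V]
  define A where "A = V * rdiag n d * adj V"
  have dimA: "dim_row A = n" using v by (simp add: A_def)
  have "\<exists>V' d'. unitary_mat n V' \<and> A = V' * rdiag n d' * adj V' \<and>
      hfun f A = V' * rdiag n (\<lambda>i. f (d' i)) * adj V'"
    unfolding hfun_def dimA by (rule someI_ex) (use V A_def in blast)
  then obtain V' d' where V': "unitary_mat n V'" and A': "A = V' * rdiag n d' * adj V'"
    and h: "hfun f A = V' * rdiag n (\<lambda>i. f (d' i)) * adj V'" by blast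
  note v' = unitary_matD[OF V']
  define M where "M = adj V' * V"
  have Mc: "M \<in> carrier_mat n n" unfolding M_def using v v' by auto
  have "adj V' * A * V = rdiag n d' * M"
    unfolding A' M_def using V' v v' by (simp add: assoc_mult_mat_dims unitary_cancel)
  moreover have "adj V' * A * V = M * rdiag n d"
    unfolding A_def M_def using v v' by (simp add: assoc_mult_mat_dims)
  ultimately have fM: "rdiag n (\<lambda>i. f (d' i)) * M = M * rdiag n (\<lambda>i. f (d i))"
    using rdiag_intertwine_fun[OF Mc] by simp
  have "hfun f A = V' * rdiag n (\<lambda>i. f (d' i)) * adj V' * (V * adj V)" using h v v' by simp
  also have "\<dots> = V' * (rdiag n (\<lambda>i. f (d' i)) * M) * adj V"
    unfolding M_def using v v' by (simp add: assoc_mult_mat_dims)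
  also have "\<dots> = V * rdiag n (\<lambda>i. f (d i)) * adj V"
    unfolding fM unfolding M_def using v v'
    by (simp add: assoc_mult_mat_dims unitary_cancel(2)[OF V'] carrier_matD[OF v(1)])
  finally show ?thesis unfolding A_def .
qed

lemma unitary_conj_unitary_conj_rdiag:
  assumes "U \<in> carrier_mat n n" "V \<in> carrier_mat n n"
  shows "U * (V * rdiag n d * adj V) * adj U = (U * V) * rdiag n d * adj (U * V)"
  using assms by (simp add: adj_mult[of _ n n _ n] assoc_mult_mat_dims)

definition pos_def_mat :: "nat \<Rightarrow> complex mat \<Rightarrow> bool" where
  "pos_def_mat n A \<longleftrightarrow> (\<exists>V d. unitary_mat n V \<and> (\<forall>i<n. 0 < d i) \<and> A = V * rdiag n d * adj V)"

lemma pos_def_matE: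
  assumes "pos_def_mat n A"
  obtains V d where "unitary_mat n V" "\<And>i. i < n \<Longrightarrow> 0 < d i" "A = V * rdiag n d * adj V"
  using assms by (auto simp: pos_def_mat_def)

lemma pos_def_mat_carrier: "pos_def_mat n A \<Longrightarrow> A \<in> carrier_mat n n"
  by (auto simp: pos_def_mat_def unitary_mat_def)

lemma pos_def_mat_unitary_conj:
  assumes "unitary_mat n U" "pos_def_mat n A"
  shows "pos_def_mat n (U * A * adj U)"
proof -
  obtain V d where "unitary_mat n V" "\<And>i. i < n \<Longrightarrow> 0 < d i" "A = V * rdiag n d * adj V"
    using pos_def_matE[OF assms(2)] by blast
  then show ?thesis
    using unitary_mat_mult[OF assms(1)] unitary_conj_unitary_conj_rdiag[of U n V d] unitary_matD(1)[OF assms(1)]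
    unfolding pos_def_mat_def by (metis unitary_matD(1))
qed

lemma mln_unitary_conj:
  assumes U: "unitary_mat n U" and A: "pos_def_mat n A"
  shows "mln (U * A * adj U) = U * mln A * adj U"
proof -
  obtain V d where V: "unitary_mat n V" and Ad: "A = V * rdiag n d * adj V"
    using pos_def_matE[OF A] by blast
  have "mln (U * A * adj U) = (U * V) * rdiag n (\<lambda>i. ln (d i)) * adj (U * V)"
    unfolding Ad mln_def using U V
    by (simp add: unitary_conj_unitary_conj_rdiag unitary_matD hfun_unitary_conj_rdiag unitary_mat_mult)
  also have "\<dots> = U * mln A * adj U"
    unfolding Ad mln_def using U V
    by (simp add: unitary_conj_unitary_conj_rdiag unitary_matD hfun_unitary_conj_rdiag)
  finally show ?thesis .
qed

lemma mtrace_mult_mln_unitary_conj_rdiag: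
  "unitary_mat n V \<Longrightarrow>
    mtrace (V * rdiag n d * adj V * mln (V * rdiag n d * adj V)) = complex_of_real (\<Sum>i<n. d i * ln (d i))"
  by (simp add: mln_def hfun_unitary_conj_rdiag mtrace_mult_unitary_conj_rdiag)

lemma gibbs_unitary_conj_rdiag:
  assumes V: "unitary_mat n V"
  shows "part_fun \<beta> (V * rdiag n h * adj V) = (\<Sum>i<n. exp (- \<beta> * h i))"
    and "gibbs \<beta> (V * rdiag n h * adj V)
       = V * rdiag n (\<lambda>i. exp (- \<beta> * h i) / (\<Sum>j<n. exp (- \<beta> * h j))) * adj V"
proof -
  note v = unitary_matD[OF V]
  have me: "mexp (complex_of_real (- \<beta>) \<cdot>\<^sub>m (V * rdiag n h * adj V)) = V * rdiag n (\<lambda>i. exp (- \<beta> * h i)) * adj V"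
    unfolding mexp_def smult_unitary_conj_rdiag[OF v(1)] by (rule hfun_unitary_conj_rdiag[OF V])
  show pf: "part_fun \<beta> (V * rdiag n h * adj V) = (\<Sum>i<n. exp (- \<beta> * h i))"
    unfolding part_fun_def me using V by (simp add: mtrace_unitary_conj_rdiag)
  show "gibbs \<beta> (V * rdiag n h * adj V)
       = V * rdiag n (\<lambda>i. exp (- \<beta> * h i) / (\<Sum>j<n. exp (- \<beta> * h j))) * adj V"
    unfolding gibbs_def me pf unfolding smult_unitary_conj_rdiag[OF v(1)]
    by (simp add: mult.commute)
qed

lemma gibbs_spectral:
  assumes "hermitian_mat n H" "0 < n"
  obtains V h g where "unitary_mat n V" "H = V * rdiag n h * adj V"
    "part_fun \<beta> H = (\<Sum>j<n. exp (- \<beta> * h j))" "0 < part_fun \<beta> H"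
    "g = (\<lambda>i. exp (- \<beta> * h i) / part_fun \<beta> H)" "gibbs \<beta> H = V * rdiag n g * adj V"
proof -
  obtain V h where V: "unitary_mat n V" and H: "H = V * rdiag n h * adj V"
    using spectral_decomposition[OF assms(1)] .
  have Z: "part_fun \<beta> H = (\<Sum>j<n. exp (- \<beta> * h j))"
    unfolding H by (rule gibbs_unitary_conj_rdiag(1)[OF V])
  moreover have "0 < (\<Sum>j<n. exp (- \<beta> * h j))" using assms(2) by (intro sum_pos) auto
  moreover have "gibbs \<beta> H = V * rdiag n (\<lambda>i. exp (- \<beta> * h i) / part_fun \<beta> H) * adj V"
    unfolding Z unfolding H by (rule gibbs_unitary_conj_rdiag(2)[OF V])
  ultimately show ?thesis using that V H by simp
qed

lemma part_fun_pos: "hermitian_mat n H \<Longrightarrow> 0 < n \<Longrightarrow> 0 < part_fun \<beta> H"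
  by (rule gibbs_spectral)

lemma pos_def_mat_gibbs:
  assumes "hermitian_mat n H" "0 < n"
  shows "pos_def_mat n (gibbs \<beta> H)"
proof -
  obtain V h g where "unitary_mat n V" "0 < part_fun \<beta> H"
    "g = (\<lambda>i. exp (- \<beta> * h i) / part_fun \<beta> H)" "gibbs \<beta> H = V * rdiag n g * adj V"
    using gibbs_spectral[OF assms] by metis
  then show ?thesis unfolding pos_def_mat_def by (intro exI[of _ V] exI[of _ g]) auto
qed

lemma mtrace_gibbs:
  assumes "hermitian_mat n H" "0 < n"
  shows "mtrace (gibbs \<beta> H) = 1"
proof -
  obtain V h g where V: "unitary_mat n V" and Z: "part_fun \<beta> H = (\<Sum>j<n. exp (- \<beta> * h j))"
    "0 < part_fun \<beta> H" and g: "g = (\<lambda>i. exp (- \<beta> * h i) / part_fun \<beta> H)"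
    and G: "gibbs \<beta> H = V * rdiag n g * adj V"
    using gibbs_spectral[OF assms] by metis
  have "mtrace (gibbs \<beta> H) = complex_of_real (\<Sum>i<n. g i)"
    unfolding G by (rule mtrace_unitary_conj_rdiag[OF V])
  also have "(\<Sum>i<n. g i) = 1" using Z unfolding g by (simp add: sum_divide_distrib[symmetric])
  finally show ?thesis by simp
qed

lemma mln_gibbs:
  assumes "hermitian_mat n H" "0 < n"
  shows "mln (gibbs \<beta> H)
       = complex_of_real (- \<beta>) \<cdot>\<^sub>m H + complex_of_real (- ln (part_fun \<beta> H)) \<cdot>\<^sub>m 1\<^sub>m n"
proof -
  obtain V h g where V: "unitary_mat n V" and H: "H = V * rdiag n h * adj V"
    and Z: "0 < part_fun \<beta> H" and g: "g = (\<lambda>i. exp (- \<beta> * h i) / part_fun \<beta> H)"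
    and G: "gibbs \<beta> H = V * rdiag n g * adj V"
    using gibbs_spectral[OF assms] by metis
  have "mln (gibbs \<beta> H) = V * rdiag n (\<lambda>i. ln (g i)) * adj V"
    unfolding mln_def G by (rule hfun_unitary_conj_rdiag[OF V])
  also have "rdiag n (\<lambda>i. ln (g i)) = rdiag n (\<lambda>i. (- \<beta>) * h i + (- ln (part_fun \<beta> H)))"
    using Z unfolding g by (intro mat_diag_cong) (simp add: ln_div)
  also have "V * \<dots> * adj V = complex_of_real (- \<beta>) \<cdot>\<^sub>m H + complex_of_real (- ln (part_fun \<beta> H)) \<cdot>\<^sub>m 1\<^sub>m n"
    unfolding H by (rule unitary_conj_rdiag_affine[OF V])
  finally show ?thesis .
qed

lemma mtrace_mult_mln_gibbs:
  assumes "hermitian_mat n H" "0 < n" "X \<in> carrier_mat n n"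
  shows "mtrace (X * mln (gibbs \<beta> H)) = - \<beta> * mtrace (X * H) - ln (part_fun \<beta> H) * mtrace X"
  using assms hermitian_matD(1)[OF assms(1)] by (simp add: mln_gibbs mtrace_mult_affine)

subsection \<open>Tensor products and the partial trace\<close>

lemma sum_lessThan_mult: "(\<Sum>r<n*m. f r) = (\<Sum>i<n. \<Sum>j<(m::nat). f (i*m+j))"
proof (induction n)
  case (Suc n)
  have "(\<Sum>r<Suc n * m. f r) = (\<Sum>r<n*m + m. f r)" by (simp add: add.commute)
  also have "\<dots> = (\<Sum>r<n*m. f r) + (\<Sum>b<m. f (n*m+b))" by (rule sum_lessThan_add_split)
  finally show ?case using Suc by simp
qed simp

lemma kron_dims[simp]: "dim_row (kron A B) = dim_row A * dim_row B" "dim_col (kron A B) = dim_col A * dim_col B"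
  by (auto simp: kron_def)

lemma kron_carrier[simp]: "A \<in> carrier_mat a b \<Longrightarrow> B \<in> carrier_mat c d \<Longrightarrow> kron A B \<in> carrier_mat (a*c) (b*d)"
  by (auto simp: kron_def)

lemma kron_index:
  assumes "A \<in> carrier_mat a b" "B \<in> carrier_mat c d" "i < a*c" "j < b*d"
  shows "kron A B $$ (i,j) = A $$ (i div c, j div d) * B $$ (i mod c, j mod d)"
  using assms by (auto simp: kron_def)

lemma mult_add_less: "i < a \<Longrightarrow> k < c \<Longrightarrow> i*c+k < a*(c::nat)"
proof -
  assume "i < a" "k < c"
  then have "i*c + k < (i+1)*c" by simp
  also have "(i+1)*c \<le> a*c" using \<open>i < a\<close> by (intro mult_le_mono1) simp
  finally show ?thesis .
qed

lemma kron_index_pair: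
  assumes "A \<in> carrier_mat a b" "B \<in> carrier_mat c d" "i < a" "j < b" "k < c" "l < d"
  shows "kron A B $$ (i*c+k, j*d+l) = A $$ (i, j) * B $$ (k, l)"
  using assms mult_add_less[of i a k c] mult_add_less[of j b l d] by (simp add: kron_index)

lemma nat_mult_index_cases: assumes "r < a*(c::nat)" obtains i k where "i < a" "k < c" "r = i*c+k"
proof -
  have c: "c > 0" using assms by (cases c) auto
  have "r div c < a" using assms by (simp add: less_mult_imp_div_less)
  moreover have "r mod c < c" using c by simp
  moreover have "r = (r div c)*c + r mod c" by simp
  ultimately show ?thesis using that by blast
qed

lemma kron_mult:
  assumes A: "A \<in> carrier_mat a b" and B: "B \<in> carrier_mat c d"
    and C: "C \<in> carrier_mat b e" and D: "D \<in> carrier_mat d f"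
  shows "kron A B * kron C D = kron (A*C) (B*D)"
proof (rule eq_matI)
  fix r s assume "r < dim_row (kron (A*C) (B*D))" "s < dim_col (kron (A*C) (B*D))"
  then have rs: "r < a*c" "s < e*f" using A B C D by auto
  obtain i k where ik: "i < a" "k < c" "r = i*c+k" using nat_mult_index_cases[OF rs(1)] by blast
  obtain j l where jl: "j < e" "l < f" "s = j*f+l" using nat_mult_index_cases[OF rs(2)] by blast
  have "(kron A B * kron C D) $$ (r,s) = (\<Sum>t<b*d. kron A B $$ (r,t) * kron C D $$ (t,s))"
    by (rule index_mult_mat_sum[of _ "a*c" "b*d" _ "e*f"]) (use A B C D rs in auto)
  also have "\<dots> = (\<Sum>p<b. \<Sum>q<d. A $$ (i,p) * B $$ (k,q) * (C $$ (p,j) * D $$ (q,l)))"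
    unfolding sum_lessThan_mult ik(3) jl(3) using A B C D ik jl by (simp add: kron_index_pair)
  also have "\<dots> = (\<Sum>p<b. A $$ (i,p) * C $$ (p,j)) * (\<Sum>q<d. B $$ (k,q) * D $$ (q,l))"
    by (simp add: sum_product mult_ac)
  also have "\<dots> = (A*C) $$ (i,j) * (B*D) $$ (k,l)"
    using A B C D ik jl by (simp add: scalar_prod_def lessThan_atLeast0)
  also have "\<dots> = kron (A*C) (B*D) $$ (r,s)"
    unfolding ik(3) jl(3) using A B C D ik jl
    by (simp add: kron_index_pair[of "A*C" a e "B*D" c f])
  finally show "(kron A B * kron C D) $$ (r,s) = kron (A*C) (B*D) $$ (r,s)" .
qed (use A B C D in auto)

lemma adj_kron:
  assumes A: "A \<in> carrier_mat a b" and B: "B \<in> carrier_mat c d"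
  shows "adj (kron A B) = kron (adj A) (adj B)"
proof (rule eq_matI)
  fix r s assume "r < dim_row (kron (adj A) (adj B))" "s < dim_col (kron (adj A) (adj B))"
  then have rs: "r < b*d" "s < a*c" using A B by auto
  obtain i k where ik: "i < b" "k < d" "r = i*d+k" using nat_mult_index_cases[OF rs(1)] by blast
  obtain j l where jl: "j < a" "l < c" "s = j*c+l" using nat_mult_index_cases[OF rs(2)] by blast
  show "adj (kron A B) $$ (r,s) = kron (adj A) (adj B) $$ (r,s)"
    unfolding ik(3) jl(3) using A B ik jl rs
    by (simp add: kron_index_pair[of "adj A" b a "adj B" d c] kron_index_pair[of A a b B c d])
qed (use A B in auto)

lemma kron_mat_diag:
  assumes "b > 0"
  shows "kron (mat_diag a u) (mat_diag b v) = mat_diag (a*b) (\<lambda>s. u (s div b) * v (s mod b))"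
proof (rule eq_matI)
  fix r s assume "r < dim_row (mat_diag (a*b) (\<lambda>s. u (s div b) * v (s mod b)))"
    "s < dim_col (mat_diag (a*b) (\<lambda>s. u (s div b) * v (s mod b)))"
  then have rs: "r < a*b" "s < a*b" by auto
  obtain i k where ik: "i < a" "k < b" "r = i*b+k" using nat_mult_index_cases[OF rs(1)] by blast
  obtain j l where jl: "j < a" "l < b" "s = j*b+l" using nat_mult_index_cases[OF rs(2)] by blast
  have eq: "(i*b+k = j*b+l) \<longleftrightarrow> (i = j \<and> k = l)"
    using ik jl by (metis div_mult_self1 div_less mod_mult_self3 mod_less add.commute add_0 less_zeroE)
  show "kron (mat_diag a u) (mat_diag b v) $$ (r,s) = mat_diag (a*b) (\<lambda>s. u (s div b) * v (s mod b)) $$ (r,s)"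
    unfolding ik(3) jl(3) using ik jl rs eq
    by (simp add: kron_index_pair[of _ a a _ b b] mat_diag_def)
qed auto

lemma kron_one: "b > 0 \<Longrightarrow> kron (1\<^sub>m a) (1\<^sub>m b) = 1\<^sub>m (a*b)"
  using kron_mat_diag[of b a "\<lambda>_. 1" "\<lambda>_. 1"] by (simp add: mat_diag_one[symmetric] del: mat_diag_one)

lemma unitary_mat_kron:
  assumes V: "unitary_mat a V" and W: "unitary_mat b W" and b: "b > 0"
  shows "unitary_mat (a*b) (kron V W)"
proof -
  note v = unitary_matD[OF V] and w = unitary_matD[OF W]
  have "adj (kron V W) * kron V W = kron (adj V * V) (adj W * W)"
    using v w by (simp add: adj_kron[of _ a a _ b b] kron_mult[of _ a a _ b b _ a _ b])
  also have "\<dots> = 1\<^sub>m (a*b)" using v w b by (simp add: kron_one)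
  finally show ?thesis using v w by (intro unitary_matI) auto
qed

lemma div_mod_less_mult: "i < a*(c::nat) \<Longrightarrow> i div c < a" "i < a*(c::nat) \<Longrightarrow> i mod c < c"
  by (simp add: less_mult_imp_div_less) (cases c, auto)

lemma kron_add_right: "A \<in> carrier_mat a b \<Longrightarrow> B \<in> carrier_mat c d \<Longrightarrow> B' \<in> carrier_mat c d \<Longrightarrow>
  kron A (B + B') = kron A B + kron A B'"
  apply (rule eq_matI)
  subgoal for i j using div_mod_less_mult[of i a c] div_mod_less_mult[of j b d] by (simp add: kron_def algebra_simps)
  by (auto simp: kron_def)

lemma kron_smult_right: "A \<in> carrier_mat a b \<Longrightarrow> B \<in> carrier_mat c d \<Longrightarrow> kron A (x \<cdot>\<^sub>m B) = x \<cdot>\<^sub>m kron A B"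
  apply (rule eq_matI)
  subgoal for i j using div_mod_less_mult[of i a c] div_mod_less_mult[of j b d] by (simp add: kron_def algebra_simps)
  by (auto simp: kron_def)

lemma ptrace_carrier[simp]: "M \<in> carrier_mat (n*m) (n*m) \<Longrightarrow> m > 0 \<Longrightarrow> ptrace_B m M \<in> carrier_mat n n"
  by (auto simp: ptrace_B_def)

lemma ptrace_dims[simp]: "M \<in> carrier_mat (n*m) (n*m) \<Longrightarrow> m > 0 \<Longrightarrow> dim_row (ptrace_B m M) = n"
   "M \<in> carrier_mat (n*m) (n*m) \<Longrightarrow> m > 0 \<Longrightarrow> dim_col (ptrace_B m M) = n"
  by (auto simp: ptrace_B_def)

lemma msum_dims[simp]: "dim_row (msum N K F) = N" "dim_col (msum N K F) = N"
  by (auto simp: msum_def)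

lemma ptrace_index: "M \<in> carrier_mat (n*m) (n*m) \<Longrightarrow> m > 0 \<Longrightarrow> i < n \<Longrightarrow> k < n \<Longrightarrow>
  ptrace_B m M $$ (i,k) = (\<Sum>j<m. M $$ (i*m+j, k*m+j))"
  by (auto simp: ptrace_B_def)

lemma mtrace_mult_ptrace:
  assumes M: "M \<in> carrier_mat (n*m) (n*m)" and H: "H \<in> carrier_mat n n" and m: "m > 0"
  shows "mtrace (H * ptrace_B m M) = mtrace (kron H (1\<^sub>m m) * M)"
proof -
  have P: "ptrace_B m M \<in> carrier_mat n n" using M m by simp
  have "mtrace (H * ptrace_B m M) = (\<Sum>i<n. \<Sum>k<n. H $$ (i,k) * (\<Sum>j<m. M $$ (k*m+j, i*m+j)))"
    using H P M m by (simp add: mtrace_eq_sum[of _ n] scalar_prod_def lessThan_atLeast0 ptrace_index)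
  also have "\<dots> = (\<Sum>i<n. \<Sum>j<m. \<Sum>k<n. \<Sum>l<m. kron H (1\<^sub>m m) $$ (i*m+j, k*m+l) * M $$ (k*m+l, i*m+j))"
  proof (rule sum.cong[OF refl])
    fix i assume i: "i \<in> {..<n}"
    have "(\<Sum>k<n. H $$ (i,k) * (\<Sum>j<m. M $$ (k*m+j, i*m+j)))
        = (\<Sum>j<m. \<Sum>k<n. H $$ (i,k) * M $$ (k*m+j, i*m+j))"
      by (subst sum.swap) (simp add: sum_distrib_left)
    also have "\<dots> = (\<Sum>j<m. \<Sum>k<n. \<Sum>l<m. kron H (1\<^sub>m m) $$ (i*m+j, k*m+l) * M $$ (k*m+l, i*m+j))"
    proof (intro sum.cong refl)
      fix j k assume jk: "j \<in> {..<m}" "k \<in> {..<n}"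
      have e: "kron H (1\<^sub>m m) $$ (i*m+j, k*m+l) = H $$ (i,k) * (if j = l then 1 else 0)" if "l < m" for l
        using i jk H that by (simp add: kron_index_pair[of H n n "1\<^sub>m m" m m])
      have "(\<Sum>l<m. kron H (1\<^sub>m m) $$ (i*m+j, k*m+l) * M $$ (k*m+l, i*m+j))
          = (\<Sum>l<m. if l = j then H $$ (i,k) * M $$ (k*m+l, i*m+j) else 0)"
        using e by (intro sum.cong refl) auto
      also have "\<dots> = H $$ (i,k) * M $$ (k*m+j, i*m+j)" using jk by simp
      finally show "H $$ (i,k) * M $$ (k*m+j, i*m+j) =
          (\<Sum>l<m. kron H (1\<^sub>m m) $$ (i*m+j, k*m+l) * M $$ (k*m+l, i*m+j))" by simp
    qed
    finally show "(\<Sum>k<n. H $$ (i,k) * (\<Sum>j<m. M $$ (k*m+j, i*m+j)))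
        = (\<Sum>j<m. \<Sum>k<n. \<Sum>l<m. kron H (1\<^sub>m m) $$ (i*m+j, k*m+l) * M $$ (k*m+l, i*m+j))" .
  qed
  also have "\<dots> = mtrace (kron H (1\<^sub>m m) * M)"
    using H M mult_carrier_mat[OF kron_carrier[OF H one_carrier_mat[of m]] M]
    by (simp add: mtrace_eq_sum[of _ "n*m"] scalar_prod_def lessThan_atLeast0[symmetric] sum_lessThan_mult)
  finally show ?thesis .
qed

lemma adj_ptrace:
  assumes M: "M \<in> carrier_mat (n*m) (n*m)" and m: "m > 0"
  shows "adj (ptrace_B m M) = ptrace_B m (adj M)"
proof (rule eq_matI)
  fix i k assume "i < dim_row (ptrace_B m (adj M))" "k < dim_col (ptrace_B m (adj M))"
  then have ik: "i < n" "k < n" using M m adj_carrier[OF M] ptrace_dims[of "adj M" n m] by auto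
  have "adj (ptrace_B m M) $$ (i,k) = cnj (\<Sum>j<m. M $$ (k*m+j, i*m+j))"
    using M m ik by (simp add: ptrace_index)
  also have "\<dots> = (\<Sum>j<m. adj M $$ (i*m+j, k*m+j))"
    unfolding cnj_sum using M ik mult_add_less[of i n _ m] mult_add_less[of k n _ m] by (intro sum.cong refl) auto
  also have "\<dots> = ptrace_B m (adj M) $$ (i,k)"
    using M m ik by (intro ptrace_index[of "adj M" n m, symmetric]) auto
  finally show "adj (ptrace_B m M) $$ (i,k) = ptrace_B m (adj M) $$ (i,k)" .
qed (simp_all add: ptrace_dims[OF adj_carrier[OF M] m] ptrace_dims[OF M m])

lemma msum_carrier[simp]: "msum N K F \<in> carrier_mat N N"
  by (simp add: msum_def)

lemma msum_index: "i < N \<Longrightarrow> j < N \<Longrightarrow> msum N K F $$ (i,j) = (\<Sum>k<K. F k $$ (i,j))"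
  by (simp add: msum_def)

lemma mtrace_mult_msum:
  assumes X: "X \<in> carrier_mat N N" and F: "\<And>k. k < K \<Longrightarrow> F k \<in> carrier_mat N N"
  shows "mtrace (X * msum N K F) = (\<Sum>k<K. mtrace (X * F k))"
proof -
  have "mtrace (X * msum N K F) = (\<Sum>i<N. \<Sum>l<N. X $$ (i,l) * (\<Sum>k<K. F k $$ (l,i)))"
    using X by (simp add: mtrace_eq_sum[of _ N] scalar_prod_def lessThan_atLeast0 msum_index)
  also have "\<dots> = (\<Sum>i<N. \<Sum>l<N. \<Sum>k<K. X $$ (i,l) * F k $$ (l,i))"
    by (simp add: sum_distrib_left)
  also have "\<dots> = (\<Sum>i<N. \<Sum>k<K. \<Sum>l<N. X $$ (i,l) * F k $$ (l,i))"
    by (rule sum.cong[OF refl], rule sum.swap)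
  also have "\<dots> = (\<Sum>k<K. \<Sum>i<N. \<Sum>l<N. X $$ (i,l) * F k $$ (l,i))"
    by (rule sum.swap)
  also have "\<dots> = (\<Sum>k<K. mtrace (X * F k))"
  proof (intro sum.cong refl)
    fix k assume "k \<in> {..<K}"
    then have Fk: "F k \<in> carrier_mat N N" using F by simp
    show "(\<Sum>i<N. \<Sum>l<N. X $$ (i,l) * F k $$ (l,i)) = mtrace (X * F k)"
      using X Fk by (simp add: mtrace_eq_sum[of _ N] scalar_prod_def lessThan_atLeast0)
  qed
  finally show ?thesis .
qed

lemma kron_unitary_conj_rdiag:
  assumes V: "V \<in> carrier_mat a a" and W: "W \<in> carrier_mat b b" and b: "b > 0"
  shows "kron (V * rdiag a u * adj V) (W * rdiag b v * adj W)
       = kron V W * rdiag (a*b) (\<lambda>s. u (s div b) * v (s mod b)) * adj (kron V W)"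
proof -
  have "kron (V * rdiag a u * adj V) (W * rdiag b v * adj W) = kron (V * rdiag a u) (W * rdiag b v) * kron (adj V) (adj W)"
    using V W by (simp add: kron_mult[of _ a a _ b b _ a _ b])
  also have "kron (V * rdiag a u) (W * rdiag b v) = kron V W * kron (rdiag a u) (rdiag b v)"
    using V W by (simp add: kron_mult[of _ a a _ b b _ a _ b])
  also have "kron (rdiag a u) (rdiag b v) = rdiag (a*b) (\<lambda>s. u (s div b) * v (s mod b))"
    using b by (simp add: kron_mat_diag)
  finally show ?thesis using V W by (simp add: adj_kron[of _ a a _ b b])
qed

lemma mtrace_kron:
  assumes "A \<in> carrier_mat a a" "B \<in> carrier_mat b b"
  shows "mtrace (kron A B) = mtrace A * mtrace B"
  using assms by (simp add: mtrace_eq_sum[of _ "a*b"] mtrace_eq_sum[of _ a] mtrace_eq_sum[of _ b]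
      sum_lessThan_mult kron_index_pair sum_product)

lemma msum_cong: "(\<And>k. k < K \<Longrightarrow> F k = G k) \<Longrightarrow> msum N K F = msum N K G"
  unfolding msum_def by (rule eq_matI) auto

lemma msum_unitary_conj_rdiag:
  assumes R: "R \<in> carrier_mat N N"
  shows "msum N K (\<lambda>k. complex_of_real (c k) \<cdot>\<^sub>m (R * rdiag N (\<mu> k) * adj R))
       = R * rdiag N (\<lambda>r. \<Sum>k<K. c k * \<mu> k r) * adj R"
proof (rule eq_matI)
  fix i j assume "i < dim_row (R * rdiag N (\<lambda>r. \<Sum>k<K. c k * \<mu> k r) * adj R)"
    "j < dim_col (R * rdiag N (\<lambda>r. \<Sum>k<K. c k * \<mu> k r) * adj R)"
  then have ij: "i < N" "j < N" using R by auto
  have "msum N K (\<lambda>k. complex_of_real (c k) \<cdot>\<^sub>m (R * rdiag N (\<mu> k) * adj R)) $$ (i,j)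
      = (\<Sum>k<K. complex_of_real (c k) * (\<Sum>r<N. R $$ (i,r) * complex_of_real (\<mu> k r) * cnj (R $$ (j,r))))"
    using R ij by (simp add: msum_index index_unitary_conj_rdiag del: index_mult_mat(1))
  also have "\<dots> = (\<Sum>r<N. R $$ (i,r) * complex_of_real (\<Sum>k<K. c k * \<mu> k r) * cnj (R $$ (j,r)))"
    by (simp add: sum_distrib_left sum_distrib_right sum.swap[of _ "{..<K}"] mult_ac)
  also have "\<dots> = (R * rdiag N (\<lambda>r. \<Sum>k<K. c k * \<mu> k r) * adj R) $$ (i,j)"
    by (subst index_unitary_conj_rdiag[OF R ij]) simp
  finally show "msum N K (\<lambda>k. complex_of_real (c k) \<cdot>\<^sub>m (R * rdiag N (\<mu> k) * adj R)) $$ (i,j) =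
      (R * rdiag N (\<lambda>r. \<Sum>k<K. c k * \<mu> k r) * adj R) $$ (i,j)" .
qed (use R in auto)

lemma mln_carrier: "pos_def_mat n A \<Longrightarrow> mln A \<in> carrier_mat n n"
  by (auto elim!: pos_def_matE simp: mln_def hfun_unitary_conj_rdiag unitary_matD)

lemma pos_def_mat_kron:
  assumes A: "pos_def_mat n A" and B: "pos_def_mat m B" and m: "0 < m"
  shows "pos_def_mat (n * m) (kron A B)"
proof -
  obtain V a where V: "unitary_mat n V" "\<And>i. i < n \<Longrightarrow> 0 < a i" "A = V * rdiag n a * adj V"
    using pos_def_matE[OF A] by blast
  obtain W b where W: "unitary_mat m W" "\<And>j. j < m \<Longrightarrow> 0 < b j" "B = W * rdiag m b * adj W"
    using pos_def_matE[OF B] by blast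
  have "kron A B = kron V W * rdiag (n * m) (\<lambda>s. a (s div m) * b (s mod m)) * adj (kron V W)"
    unfolding V(3) W(3) using V(1) W(1) m by (simp add: kron_unitary_conj_rdiag unitary_matD)
  moreover have "0 < a (s div m) * b (s mod m)" if "s < n * m" for s
    using V(2) W(2) div_mod_less_mult[OF that] by simp
  ultimately show ?thesis unfolding pos_def_mat_def using unitary_mat_kron[OF V(1) W(1) m]
    by (intro exI[of _ "kron V W"] exI[of _ "\<lambda>s. a (s div m) * b (s mod m)"]) auto
qed

lemma mln_kron:
  assumes A: "pos_def_mat n A" and B: "pos_def_mat m B" and m: "0 < m"
  shows "mln (kron A B) = kron (mln A) (1\<^sub>m m) + kron (1\<^sub>m n) (mln B)"
proof -
  obtain V a where V: "unitary_mat n V" "\<And>i. i < n \<Longrightarrow> 0 < a i" "A = V * rdiag n a * adj V"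
    using pos_def_matE[OF A] by blast
  obtain W b where W: "unitary_mat m W" "\<And>j. j < m \<Longrightarrow> 0 < b j" "B = W * rdiag m b * adj W"
    using pos_def_matE[OF B] by blast
  note v = unitary_matD[OF V(1)] and w = unitary_matD[OF W(1)]
  define X where "X = kron V W"
  have X: "unitary_mat (n * m) X" unfolding X_def by (rule unitary_mat_kron[OF V(1) W(1) m])
  have "mln (kron A B) = X * rdiag (n * m) (\<lambda>s. ln (a (s div m) * b (s mod m))) * adj X"
    unfolding V(3) W(3) X_def mln_def kron_unitary_conj_rdiag[OF v(1) w(1) m]
    by (rule hfun_unitary_conj_rdiag[OF X[unfolded X_def]])
  also have "rdiag (n * m) (\<lambda>s. ln (a (s div m) * b (s mod m)))
      = rdiag (n * m) (\<lambda>s. ln (a (s div m)) * 1 + 1 * ln (b (s mod m)))"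
  proof (intro mat_diag_cong)
    fix s assume "s < n * m"
    then have "0 < a (s div m)" "0 < b (s mod m)" using V(2) W(2) div_mod_less_mult by auto
    then show "complex_of_real (ln (a (s div m) * b (s mod m))) =
        complex_of_real (ln (a (s div m)) * 1 + 1 * ln (b (s mod m)))" by (simp add: ln_mult)
  qed
  also have "X * \<dots> * adj X = X * rdiag (n * m) (\<lambda>s. ln (a (s div m)) * 1) * adj X
      + X * rdiag (n * m) (\<lambda>s. 1 * ln (b (s mod m))) * adj X"
    using unitary_matD(1)[OF X] by (rule unitary_conj_rdiag_add)
  also have "X * rdiag (n * m) (\<lambda>s. ln (a (s div m)) * 1) * adj X = kron (mln A) (W * rdiag m (\<lambda>_. 1) * adj W)"
    unfolding X_def V(3) mln_def hfun_unitary_conj_rdiag[OF V(1)]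
    by (rule kron_unitary_conj_rdiag[OF v(1) w(1) m, symmetric])
  also have "X * rdiag (n * m) (\<lambda>s. 1 * ln (b (s mod m))) * adj X = kron (V * rdiag n (\<lambda>_. 1) * adj V) (mln B)"
    unfolding X_def W(3) mln_def hfun_unitary_conj_rdiag[OF W(1)]
    by (rule kron_unitary_conj_rdiag[OF v(1) w(1) m, symmetric])
  finally show ?thesis using unitary_conj_rdiag_one[OF V(1)] unitary_conj_rdiag_one[OF W(1)] by simp
qed

lemma mtrace_mult_kron_one:
  assumes M: "M \<in> carrier_mat (n * m) (n * m)" and H: "H \<in> carrier_mat n n" and m: "0 < m"
  shows "mtrace (M * kron H (1\<^sub>m m)) = mtrace (ptrace_B m M * H)"
proof -
  have "mtrace (M * kron H (1\<^sub>m m)) = mtrace (kron H (1\<^sub>m m) * M)"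
    using M H by (intro mtrace_mult_comm[of _ "n * m" "n * m"]) auto
  also have "\<dots> = mtrace (H * ptrace_B m M)" by (rule mtrace_mult_ptrace[OF M H m, symmetric])
  also have "\<dots> = mtrace (ptrace_B m M * H)" using M H m by (intro mtrace_mult_comm[of _ n n]) auto
  finally show ?thesis .
qed

lemma mtrace_ptrace:
  assumes "M \<in> carrier_mat (n * m) (n * m)" "0 < m"
  shows "mtrace (ptrace_B m M) = mtrace M"
  using mtrace_mult_kron_one[OF assms(1) one_carrier_mat assms(2)] assms by (simp add: kron_one)

lemma mtrace_mult_mln_kron:
  assumes M: "M \<in> carrier_mat (n * m) (n * m)" and \<sigma>: "pos_def_mat n \<sigma>" and \<tau>: "pos_def_mat m \<tau>"
    and m: "0 < m"
  shows "mtrace (M * mln (kron \<sigma> \<tau>)) = mtrace (ptrace_B m M * mln \<sigma>) + mtrace (M * kron (1\<^sub>m n) (mln \<tau>))"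
  using M mln_carrier[OF \<sigma>] mln_carrier[OF \<tau>] m
  by (simp add: mln_kron[OF \<sigma> \<tau> m] mtrace_mult_add[of _ "n * m"] mtrace_mult_kron_one)

lemma rel_entropy_kron_chain:
  assumes M: "M \<in> carrier_mat (n * m) (n * m)" and \<sigma>: "pos_def_mat n \<sigma>" and \<tau>: "pos_def_mat m \<tau>"
    and \<rho>: "pos_def_mat n (ptrace_B m M)" and m: "0 < m"
  shows "rel_entropy M (kron \<sigma> \<tau>)
       = rel_entropy (ptrace_B m M) \<sigma> + rel_entropy M (kron (ptrace_B m M) \<tau>)"
  unfolding rel_entropy_def mtrace_mult_mln_kron[OF M \<sigma> \<tau> m] mtrace_mult_mln_kron[OF M \<rho> \<tau> m]
  by simp

lemma mtrace_mult_mln_unitary_conj_kron: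
  assumes U: "unitary_mat (n * m) U" and A: "pos_def_mat n A" and B: "pos_def_mat m B"
    and trA: "mtrace A = 1" and trB: "mtrace B = 1" and m: "0 < m"
  shows "mtrace (U * kron A B * adj U * mln (U * kron A B * adj U)) = mtrace (A * mln A) + mtrace (B * mln B)"
proof -
  note Ac = pos_def_mat_carrier[OF A] and Bc = pos_def_mat_carrier[OF B]
    and lA = mln_carrier[OF A] and lB = mln_carrier[OF B]
  have K: "pos_def_mat (n * m) (kron A B)" by (rule pos_def_mat_kron[OF A B m])
  have "mtrace (U * kron A B * adj U * mln (U * kron A B * adj U)) = mtrace (kron A B * mln (kron A B))"
    using Ac Bc mln_carrier[OF K]
    by (simp add: mln_unitary_conj[OF U K] unitary_conj_mult[OF U] mtrace_unitary_conj[OF U])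
  also have "kron A B * mln (kron A B) = kron (A * mln A) B + kron A (B * mln B)"
    using Ac Bc lA lB
    by (simp add: mln_kron[OF A B m] mult_add_distrib_mat[of "kron A B" "n * m" "n * m" _ "n * m"]
        kron_mult[of _ n n _ m m _ n _ m])
  finally show ?thesis
    using Ac Bc lA lB trA trB by (simp add: mtrace_add[of _ "n * m"] mtrace_kron[of _ n _ m])
qed

subsection \<open>Klein's inequality\<close>

lemma mult_ln_le:
  fixes x y :: real
  assumes "0 < x" "0 < y"
  shows "x * ln y + x - y \<le> x * ln x"
proof -
  have "x * (ln y - ln x) \<le> x * (y / x - 1)"
    using assms ln_le_minus_one[of "y / x"] by (intro mult_left_mono) (auto simp: ln_div)
  also have "x * (y / x - 1) = y - x" using assms by (simp add: field_simps)
  finally show ?thesis by (simp add: algebra_simps)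
qed

lemma sum_mult_ln_doubly_stochastic:
  fixes w :: "nat \<Rightarrow> nat \<Rightarrow> real" and l y :: "nat \<Rightarrow> real"
  assumes w0: "\<And>s r. 0 \<le> w s r"
    and rows: "\<And>s. s < N \<Longrightarrow> (\<Sum>r<N. w s r) = 1"
    and cols: "\<And>r. r < N \<Longrightarrow> (\<Sum>s<N. w s r) = 1"
    and l: "\<And>r. r < N \<Longrightarrow> 0 < l r" and y: "\<And>s. s < N \<Longrightarrow> 0 < y s"
  shows "(\<Sum>s<N. (\<Sum>r<N. w s r * l r) * ln (y s)) + (\<Sum>r<N. l r) - (\<Sum>s<N. y s) \<le> (\<Sum>r<N. l r * ln (l r))"
proof -
  have "(\<Sum>s<N. (\<Sum>r<N. w s r * l r) * ln (y s)) + (\<Sum>r<N. l r) - (\<Sum>s<N. y s)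
      = (\<Sum>s<N. \<Sum>r<N. w s r * (l r * ln (y s) + l r - y s))"
  proof -
    have "(\<Sum>s<N. \<Sum>r<N. w s r * l r) = (\<Sum>r<N. l r)"
      using cols by (subst sum.swap) (simp add: sum_distrib_right[symmetric])
    moreover have "(\<Sum>s<N. y s * (\<Sum>r<N. w s r)) = (\<Sum>s<N. y s)" using rows by simp
    ultimately show ?thesis
      by (simp add: algebra_simps sum.distrib sum_subtractf sum_distrib_left sum_distrib_right)
  qed
  also have "\<dots> \<le> (\<Sum>s<N. \<Sum>r<N. w s r * (l r * ln (l r)))"
    using w0 l y mult_ln_le by (intro sum_mono mult_left_mono) auto
  also have "\<dots> = (\<Sum>r<N. l r * ln (l r))"
    using cols by (subst sum.swap) (simp add: sum_distrib_right[symmetric])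
  finally show ?thesis .
qed

lemma mtrace_mult_unitary_conj_rdiag_overlap:
  assumes X: "unitary_mat N X" and R: "unitary_mat N R"
  shows "mtrace (X * rdiag N c * adj X * (R * rdiag N l * adj R))
       = complex_of_real (\<Sum>s<N. c s * (\<Sum>r<N. (cmod ((adj X * R) $$ (s,r)))\<^sup>2 * l r))"
proof -
  note x = unitary_matD[OF X] and rr = unitary_matD[OF R]
  define M where "M = adj X * R"
  have Mc: "M \<in> carrier_mat N N" unfolding M_def using x(1) rr(1) by (simp add: mult_carrier_mat[of _ N N])
  have "X * rdiag N c * adj X * (R * rdiag N l * adj R) = X * (rdiag N c * (M * rdiag N l * adj M)) * adj X"
    unfolding M_def using x rr by (simp add: assoc_mult_mat_dims adj_mult[of _ N N _ N] unitary_cancel)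
  then have "mtrace (X * rdiag N c * adj X * (R * rdiag N l * adj R)) = mtrace (rdiag N c * (M * rdiag N l * adj M))"
    using X Mc by (simp add: mtrace_unitary_conj)
  also have "\<dots> = (\<Sum>s<N. complex_of_real (c s) * (M * rdiag N l * adj M) $$ (s,s))"
    using Mc by (simp add: mtrace_eq_sum[of _ N] mat_diag_mult_left[of _ N N])
  also have "\<dots> = (\<Sum>s<N. complex_of_real (c s) * complex_of_real (\<Sum>r<N. (cmod (M $$ (s,r)))\<^sup>2 * l r))"
  proof (intro sum.cong refl)
    fix s assume s: "s \<in> {..<N}"
    have "(M * rdiag N l * adj M) $$ (s,s) = (\<Sum>r<N. M $$ (s,r) * complex_of_real (l r) * cnj (M $$ (s,r)))"
      using Mc s by (simp add: index_unitary_conj_rdiag del: index_mult_mat(1))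
    also have "\<dots> = complex_of_real (\<Sum>r<N. (cmod (M $$ (s,r)))\<^sup>2 * l r)"
      unfolding of_real_sum by (intro sum.cong refl) (metis complex_norm_square mult.assoc mult.commute of_real_mult)
    finally show "complex_of_real (c s) * (M * rdiag N l * adj M) $$ (s,s) =
      complex_of_real (c s) * complex_of_real (\<Sum>r<N. (cmod (M $$ (s,r)))\<^sup>2 * l r)" by simp
  qed
  finally show ?thesis unfolding M_def by simp
qed

lemma unitary_row_norm:
  assumes "unitary_mat N M" "s < N"
  shows "(\<Sum>r<N. (cmod (M $$ (s,r)))\<^sup>2) = 1"
proof -
  have "complex_of_real (\<Sum>r<N. (cmod (M $$ (s,r)))\<^sup>2) = (\<Sum>r<N. M $$ (s,r) * cnj (M $$ (s,r)))"
    unfolding of_real_sum by (intro sum.cong refl) (rule complex_norm_square)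
  also have "\<dots> = 1" using unitary_rows[OF assms assms(2)] by simp
  finally show ?thesis by (simp only: of_real_eq_1_iff)
qed

lemma unitary_col_norm:
  assumes "unitary_mat N M" "r < N"
  shows "(\<Sum>s<N. (cmod (M $$ (s,r)))\<^sup>2) = 1"
proof -
  have "complex_of_real (\<Sum>s<N. (cmod (M $$ (s,r)))\<^sup>2) = (\<Sum>s<N. M $$ (s,r) * cnj (M $$ (s,r)))"
    unfolding of_real_sum by (intro sum.cong refl) (rule complex_norm_square)
  also have "\<dots> = 1" using unitary_cols[OF assms assms(2)] by (simp add: mult.commute)
  finally show ?thesis by (simp only: of_real_eq_1_iff)
qed

text \<open>The squared overlaps of the two eigenbases form a doubly stochastic
  matrix, which reduces the claim to the scalar inequality \<open>x ln y + x - y \<le> x ln x\<close>.\<close>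

theorem rel_entropy_nonneg:
  assumes \<rho>: "pos_def_mat N \<rho>" and \<sigma>: "pos_def_mat N \<sigma>" and tr: "mtrace \<rho> = mtrace \<sigma>"
  shows "0 \<le> rel_entropy \<rho> \<sigma>"
proof -
  obtain R l where R: "unitary_mat N R" "\<And>r. r < N \<Longrightarrow> 0 < l r" "\<rho> = R * rdiag N l * adj R"
    using pos_def_matE[OF \<rho>] by blast
  obtain X y where X: "unitary_mat N X" "\<And>s. s < N \<Longrightarrow> 0 < y s" "\<sigma> = X * rdiag N y * adj X"
    using pos_def_matE[OF \<sigma>] by blast
  define w where "w = (\<lambda>s r. (cmod ((adj X * R) $$ (s,r)))\<^sup>2)"
  have XR: "unitary_mat N (adj X * R)" by (rule unitary_mat_mult[OF unitary_mat_adj[OF X(1)] R(1)])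
  have "mtrace (\<rho> * mln \<sigma>) = mtrace (mln \<sigma> * \<rho>)"
    using R(1) X(1) mln_carrier[OF \<sigma>] unfolding R(3) by (intro mtrace_mult_comm[of _ N N]) (auto simp: unitary_matD)
  also have "\<dots> = complex_of_real (\<Sum>s<N. ln (y s) * (\<Sum>r<N. w s r * l r))"
    unfolding X(3) R(3) mln_def hfun_unitary_conj_rdiag[OF X(1)] w_def
    by (rule mtrace_mult_unitary_conj_rdiag_overlap[OF X(1) R(1)])
  finally have cross: "Re (mtrace (\<rho> * mln \<sigma>)) = (\<Sum>s<N. (\<Sum>r<N. w s r * l r) * ln (y s))"
    by (simp add: mult.commute)
  have "(\<Sum>r<N. l r) = (\<Sum>s<N. y s)"
    using tr unfolding R(3) X(3) mtrace_unitary_conj_rdiag[OF R(1)] mtrace_unitary_conj_rdiag[OF X(1)]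
    by (simp only: of_real_eq_iff)
  moreover have "Re (mtrace (\<rho> * mln \<rho>)) = (\<Sum>r<N. l r * ln (l r))"
    unfolding R(3) mtrace_mult_mln_unitary_conj_rdiag[OF R(1)] by simp
  ultimately show ?thesis
    using sum_mult_ln_doubly_stochastic[of w N l y] unitary_row_norm[OF XR] unitary_col_norm[OF XR] R(2) X(2)
    unfolding rel_entropy_def by (simp add: cross w_def)
qed

subsection \<open>Monotonicity of the relative entropy under the partial trace\<close>

lemma mtrace_mult_pos_def_pos:
  assumes X: "unitary_mat N X" and \<rho>: "pos_def_mat N \<rho>"
    and c: "\<And>s. s < N \<Longrightarrow> 0 \<le> c s" and s0: "s0 < N" "0 < c s0"
  shows "0 < Re (mtrace (X * rdiag N c * adj X * \<rho>))"
proof -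
  obtain R l where R: "unitary_mat N R" "\<And>r. r < N \<Longrightarrow> 0 < l r" "\<rho> = R * rdiag N l * adj R"
    using pos_def_matE[OF \<rho>] by blast
  define w where "w = (\<lambda>s r. (cmod ((adj X * R) $$ (s,r)))\<^sup>2)"
  define q where "q = (\<lambda>s. \<Sum>r<N. w s r * l r)"
  have XR: "unitary_mat N (adj X * R)" by (rule unitary_mat_mult[OF unitary_mat_adj[OF X] R(1)])
  have q0: "0 \<le> q s" for s unfolding q_def w_def using R(2) by (intro sum_nonneg) (simp add: less_imp_le)
  obtain r where r: "r < N" "w s0 r \<noteq> 0"
    using unitary_row_norm[OF XR s0(1)] unfolding w_def by (metis (no_types, lifting) sum.neutral lessThan_iff zero_neq_one)
  have "0 < w s0 r * l r" using r R(2) unfolding w_def by simp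
  also have "\<dots> \<le> q s0"
    unfolding q_def using r R(2) by (intro member_le_sum) (auto simp: w_def less_imp_le)
  finally have "0 < c s0 * q s0" using s0 by simp
  also have "\<dots> \<le> (\<Sum>s<N. c s * q s)"
    using s0 c q0 by (intro member_le_sum) auto
  also have "\<dots> = Re (mtrace (X * rdiag N c * adj X * \<rho>))"
    unfolding R(3) mtrace_mult_unitary_conj_rdiag_overlap[OF X R(1)] q_def w_def by simp
  finally show ?thesis .
qed

lemma pos_def_mat_ptrace:
  assumes \<Theta>: "pos_def_mat (n * m) \<Theta>" and m: "0 < m"
  shows "pos_def_mat n (ptrace_B m \<Theta>)"
proof -
  have \<Theta>c: "\<Theta> \<in> carrier_mat (n * m) (n * m)" by (rule pos_def_mat_carrier[OF \<Theta>])
  have "adj \<Theta> = \<Theta>" using \<Theta> by (auto elim!: pos_def_matE simp: unitary_matD)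
  then have "hermitian_mat n (ptrace_B m \<Theta>)"
    using \<Theta>c m adj_ptrace[OF \<Theta>c m] by (simp add: hermitian_mat_def)
  then obtain A a where A: "unitary_mat n A" and \<rho>: "ptrace_B m \<Theta> = A * rdiag n a * adj A"
    using spectral_decomposition by blast
  note aa = unitary_matD[OF A]
  have "0 < a i" if i: "i < n" for i
  proof -
    define \<delta> where "\<delta> = (\<lambda>l. if l = i then 1 else 0 :: real)"
    have "(\<Sum>l<n. \<delta> l * a l) = (\<Sum>l<n. if l = i then a l else 0)"
      by (intro sum.cong refl) (simp add: \<delta>_def)
    then have "a i = Re (mtrace (A * rdiag n \<delta> * adj A * ptrace_B m \<Theta>))"
      unfolding \<rho> mtrace_mult_unitary_conj_rdiag[OF A] using i by simp
    also have "\<dots> = Re (mtrace (kron (A * rdiag n \<delta> * adj A) (1\<^sub>m m) * \<Theta>))"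
      using aa by (simp add: mtrace_mult_ptrace[OF \<Theta>c _ m])
    also have "kron (A * rdiag n \<delta> * adj A) (1\<^sub>m m)
        = kron A (1\<^sub>m m) * rdiag (n * m) (\<lambda>s. \<delta> (s div m) * 1) * adj (kron A (1\<^sub>m m))"
      using kron_unitary_conj_rdiag[OF aa(1) one_carrier_mat m, of \<delta> "\<lambda>_. 1"] by simp
    finally show ?thesis
      using mtrace_mult_pos_def_pos[OF unitary_mat_kron[OF A unitary_mat_one m] \<Theta>, of _ "i * m"]
        mult_add_less[OF i m] by (simp add: \<delta>_def)
  qed
  then show ?thesis unfolding pos_def_mat_def using A \<rho> by blast
qed

theorem rel_entropy_ptrace_le:
  assumes \<Theta>: "pos_def_mat (n * m) \<Theta>" and \<sigma>: "pos_def_mat n \<sigma>" and \<tau>: "pos_def_mat m \<tau>"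
    and tr\<tau>: "mtrace \<tau> = 1" and m: "0 < m"
  shows "rel_entropy (ptrace_B m \<Theta>) \<sigma> \<le> rel_entropy \<Theta> (kron \<sigma> \<tau>)"
proof -
  have \<Theta>c: "\<Theta> \<in> carrier_mat (n * m) (n * m)" by (rule pos_def_mat_carrier[OF \<Theta>])
  have \<rho>: "pos_def_mat n (ptrace_B m \<Theta>)" by (rule pos_def_mat_ptrace[OF \<Theta> m])
  have "mtrace (kron (ptrace_B m \<Theta>) \<tau>) = mtrace \<Theta>"
    using pos_def_mat_carrier[OF \<rho>] pos_def_mat_carrier[OF \<tau>] tr\<tau> mtrace_ptrace[OF \<Theta>c m]
    by (simp add: mtrace_kron[of _ n _ m])
  then have "0 \<le> rel_entropy \<Theta> (kron (ptrace_B m \<Theta>) \<tau>)"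
    by (intro rel_entropy_nonneg[OF \<Theta> pos_def_mat_kron[OF \<rho> \<tau> m]]) simp
  then show ?thesis unfolding rel_entropy_kron_chain[OF \<Theta>c \<sigma> \<tau> \<rho> m] by simp
qed

lemma eigenbasis_decomposition:
  assumes H: "H \<in> carrier_mat n n" and es: "orthonormal n n es"
    and eig: "\<And>k. k < n \<Longrightarrow> H *\<^sub>v es k = complex_of_real (eps k) \<cdot>\<^sub>v es k"
  defines "V \<equiv> mat n n (\<lambda>(a,k). es k $ a)"
  shows "H = V * rdiag n eps * adj V"
proof -
  note V = unitary_mat_of_orthonormal[OF es, folded V_def] and v = unitary_matD[OF V(1)]
  have "H * V = V * rdiag n eps"
  proof (rule eq_matI)
    fix a i assume "a < dim_row (V * rdiag n eps)" "i < dim_col (V * rdiag n eps)"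
    then have ai: "a < n" "i < n" using v by auto
    have "(H * V) $$ (a,i) = (H *\<^sub>v es i) $ a" using ai H v V(2) by simp
    also have "\<dots> = es i $ a * complex_of_real (eps i)"
    proof -
      have "es i \<in> carrier_vec n" using es ai by (simp add: orthonormal_def)
      then show ?thesis using eig[of i] ai by (simp add: mult.commute)
    qed
    also have "\<dots> = (V * rdiag n eps) $$ (a,i)"
      using ai v by (simp add: mat_diag_mult_right[of V n n]) (simp add: V_def)
    finally show "(H * V) $$ (a,i) = (V * rdiag n eps) $$ (a,i)" .
  qed (use H v in auto)
  then have "H * V * adj V = V * rdiag n eps * adj V" by simp
  then show ?thesis using H v by (simp add: assoc_mult_mat[of _ n n _ n _ n])
qed

lemma proj_carrier: "v \<in> carrier_vec n \<Longrightarrow> proj v \<in> carrier_mat n n"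
  by (simp add: proj_def)

lemma proj_eigenbasis:
  assumes es: "orthonormal n n es" and k: "k < n"
  defines "V \<equiv> mat n n (\<lambda>(a,k). es k $ a)"
  shows "proj (es k) = V * rdiag n (\<lambda>i. if i = k then 1 else 0) * adj V"
proof (rule eq_matI)
  have ek: "es k \<in> carrier_vec n" using es k by (simp add: orthonormal_def)
  fix a b assume "a < dim_row (V * rdiag n (\<lambda>i. if i = k then 1 else 0) * adj V)"
    "b < dim_col (V * rdiag n (\<lambda>i. if i = k then 1 else 0) * adj V)"
  then have ab: "a < n" "b < n" unfolding V_def by auto
  have "(V * rdiag n (\<lambda>i. if i = k then 1 else 0) * adj V) $$ (a,b)
      = (\<Sum>r<n. es r $ a * complex_of_real (if r = k then 1 else 0) * cnj (es r $ b))"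
    unfolding V_def using ab by (subst index_unitary_conj_rdiag) auto
  also have "\<dots> = (\<Sum>r<n. if r = k then es k $ a * cnj (es k $ b) else 0)"
    by (intro sum.cong) auto
  also have "\<dots> = proj (es k) $$ (a,b)" using ab k ek by (simp add: proj_def)
  finally show "proj (es k) $$ (a,b) = (V * rdiag n (\<lambda>i. if i = k then 1 else 0) * adj V) $$ (a,b)" by simp
qed (use es k in \<open>auto simp: proj_def orthonormal_def V_def\<close>)

lemma msum_evolved_eigenprojections:
  assumes es: "orthonormal n n es" and U: "U \<in> carrier_mat (n * m) (n * m)"
    and \<tau>: "pos_def_mat m \<tau>" and m: "0 < m"
  defines "V \<equiv> mat n n (\<lambda>(a,k). es k $ a)"
  shows "msum (n * m) n (\<lambda>k. complex_of_real (p k) \<cdot>\<^sub>m (U * kron (proj (es k)) \<tau> * adj U))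
       = U * kron (V * rdiag n p * adj V) \<tau> * adj U"
proof -
  obtain W g where W: "unitary_mat m W" "\<tau> = W * rdiag m g * adj W" using pos_def_matE[OF \<tau>] by blast
  note v = unitary_matD[OF unitary_mat_of_orthonormal(1)[OF es, folded V_def]] and w = unitary_matD[OF W(1)]
  define R where "R = U * kron V W"
  have conj: "U * kron (V * rdiag n q * adj V) \<tau> * adj U = R * rdiag (n * m) (\<lambda>r. q (r div m) * g (r mod m)) * adj R"
    for q unfolding W(2) R_def kron_unitary_conj_rdiag[OF v(1) w(1) m]
    by (rule unitary_conj_unitary_conj_rdiag[OF U]) (use v w in simp)
  have "msum (n * m) n (\<lambda>k. complex_of_real (p k) \<cdot>\<^sub>m (U * kron (proj (es k)) \<tau> * adj U))
      = msum (n * m) n (\<lambda>k. complex_of_real (p k) \<cdot>\<^sub>m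
          (R * rdiag (n * m) (\<lambda>r. (if r div m = k then 1 else 0) * g (r mod m)) * adj R))"
    using conj proj_eigenbasis[OF es, folded V_def] by (intro msum_cong) simp
  also have "\<dots> = R * rdiag (n * m) (\<lambda>r. \<Sum>k<n. p k * ((if r div m = k then 1 else 0) * g (r mod m))) * adj R"
    using U v w unfolding R_def by (intro msum_unitary_conj_rdiag) simp
  also have "\<dots> = R * rdiag (n * m) (\<lambda>r. p (r div m) * g (r mod m)) * adj R"
    using div_mod_less_mult[of _ n m] by (intro arg_cong2[where f = "(*)"] refl mat_diag_cong)
      (simp add: if_distrib[of "\<lambda>x. p _ * (x * _)"] cong: if_cong)
  finally show ?thesis using conj by simp
qed

lemma mtrace_ptrace_msum:
  assumes F: "\<And>k. k < K \<Longrightarrow> F k \<in> carrier_mat (n * m) (n * m)" and H: "H \<in> carrier_mat n n" and m: "0 < m"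
  shows "mtrace (ptrace_B m (msum (n * m) K (\<lambda>k. c k \<cdot>\<^sub>m F k)) * H)
       = (\<Sum>k<K. c k * mtrace (H * ptrace_B m (F k)))"
proof -
  have "mtrace (ptrace_B m (msum (n * m) K (\<lambda>k. c k \<cdot>\<^sub>m F k)) * H)
      = mtrace (kron H (1\<^sub>m m) * msum (n * m) K (\<lambda>k. c k \<cdot>\<^sub>m F k))"
    using H m by (simp add: mtrace_mult_comm[of _ n n H] mtrace_mult_ptrace[of _ n m])
  also have "\<dots> = (\<Sum>k<K. mtrace (kron H (1\<^sub>m m) * (c k \<cdot>\<^sub>m F k)))"
    using F H by (intro mtrace_mult_msum) auto
  also have "\<dots> = (\<Sum>k<K. c k * mtrace (H * ptrace_B m (F k)))"
  proof (intro sum.cong refl)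
    fix k assume "k \<in> {..<K}"
    then show "mtrace (kron H (1\<^sub>m m) * (c k \<cdot>\<^sub>m F k)) = c k * mtrace (H * ptrace_B m (F k))"
      using F[of k] H by (simp add: mtrace_mult_smult[of _ "n * m"] mtrace_mult_ptrace[OF F[of k] H m])
  qed
  finally show ?thesis .
qed

lemma gibbs_weights_state:
  fixes x p :: "nat \<Rightarrow> real" and \<beta> Z :: real
  assumes V: "unitary_mat n V" and n: "0 < n"
    and Z_def: "Z = (\<Sum>k<n. exp (- \<beta> * x k))" and p_def: "p = (\<lambda>k. exp (- \<beta> * x k) / Z)"
  shows "pos_def_mat n (V * rdiag n p * adj V)" "mtrace (V * rdiag n p * adj V) = 1"
    "Re (mtrace (V * rdiag n p * adj V * mln (V * rdiag n p * adj V))) = - \<beta> * (\<Sum>k<n. p k * x k) - ln Z"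
proof -
  have Z: "0 < Z" unfolding Z_def using n by (intro sum_pos) auto
  have p1: "(\<Sum>k<n. p k) = 1" unfolding p_def Z_def using Z by (simp add: sum_divide_distrib[symmetric] Z_def)
  show "pos_def_mat n (V * rdiag n p * adj V)"
    unfolding pos_def_mat_def using V Z by (intro exI[of _ V] exI[of _ p]) (auto simp: p_def)
  show "mtrace (V * rdiag n p * adj V) = 1" using p1 by (simp add: mtrace_unitary_conj_rdiag[OF V])
  have lnp: "ln (p k) = - \<beta> * x k - ln Z" for k using Z by (simp add: p_def ln_div)
  have "(\<Sum>k<n. p k * ln (p k)) = (\<Sum>k<n. - \<beta> * (p k * x k) - ln Z * p k)"
    unfolding lnp by (simp add: algebra_simps)
  also have "\<dots> = - \<beta> * (\<Sum>k<n. p k * x k) - ln Z"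
    using p1 by (simp add: sum_subtractf sum_negf flip: sum_distrib_left)
  finally show "Re (mtrace (V * rdiag n p * adj V * mln (V * rdiag n p * adj V))) = - \<beta> * (\<Sum>k<n. p k * x k) - ln Z"
    by (simp add: mtrace_mult_mln_unitary_conj_rdiag[OF V])
qed

lemma mtrace_mult_mln_kron_gibbs:
  fixes \<beta>S \<beta>B :: real
  assumes H: "hermitian_mat n H" and HB: "hermitian_mat m HB"
    and M: "M \<in> carrier_mat (n * m) (n * m)" and trM: "mtrace M = 1" and n: "0 < n" and m: "0 < m"
  shows "mtrace (M * mln (kron (gibbs \<beta>S H) (gibbs \<beta>B HB)))
       = - \<beta>S * mtrace (ptrace_B m M * H) - ln (part_fun \<beta>S H)
         - \<beta>B * mtrace (kron (1\<^sub>m n) HB * M) - ln (part_fun \<beta>B HB)"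
proof -
  note HBc = hermitian_matD(1)[OF HB]
  have "kron (1\<^sub>m n) (mln (gibbs \<beta>B HB))
      = complex_of_real (- \<beta>B) \<cdot>\<^sub>m kron (1\<^sub>m n) HB + complex_of_real (- ln (part_fun \<beta>B HB)) \<cdot>\<^sub>m 1\<^sub>m (n * m)"
    unfolding mln_gibbs[OF HB m] using HBc m
    by (simp add: kron_add_right[of _ n n _ m m] kron_smult_right[of _ n n _ m m] kron_one)
  then have "mtrace (M * kron (1\<^sub>m n) (mln (gibbs \<beta>B HB)))
      = - \<beta>B * mtrace (kron (1\<^sub>m n) HB * M) - ln (part_fun \<beta>B HB)"
    using M HBc trM mtrace_mult_comm[of M "n * m" "n * m" "kron (1\<^sub>m n) HB"]
    by (simp add: mtrace_mult_affine[of _ "n * m"])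
  moreover have "mtrace (ptrace_B m M * mln (gibbs \<beta>S H)) = - \<beta>S * mtrace (ptrace_B m M * H) - ln (part_fun \<beta>S H)"
    using M m trM by (simp add: mtrace_mult_mln_gibbs[OF H n] mtrace_ptrace)
  ultimately show ?thesis
    using mtrace_mult_mln_kron[OF M pos_def_mat_gibbs[OF H n] pos_def_mat_gibbs[OF HB m] m] by simp
qed

theorem rel_entropy_evolved_gibbs_mixture:
  fixes \<beta>S \<beta>B Z :: real and E :: "nat \<Rightarrow> real" and \<tau> \<Theta> :: "complex mat"
  assumes es: "orthonormal n n es" and H: "hermitian_mat n H" and HB: "hermitian_mat m HB"
    and U: "unitary_mat (n * m) U" and n: "0 < n" and m: "0 < m"
    and \<tau>_def: "\<tau> = gibbs \<beta>B HB"
    and E: "\<And>k. E k = Re (mtrace (H * ptrace_B m (U * kron (proj (es k)) \<tau> * adj U)))"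
  defines "Z \<equiv> (\<Sum>k<n. exp (- \<beta>S * E k))"
    and "\<Theta> \<equiv> msum (n * m) n (\<lambda>k. complex_of_real (exp (- \<beta>S * E k) / Z) \<cdot>\<^sub>m (U * kron (proj (es k)) \<tau> * adj U))"
  shows "rel_entropy \<Theta> (kron (gibbs \<beta>S H) \<tau>)
       = ln (part_fun \<beta>S H) - ln Z - \<beta>B * (Re (mtrace (HB * \<tau>)) - Re (mtrace (kron (1\<^sub>m n) HB * \<Theta>)))"
    and "rel_entropy (ptrace_B m \<Theta>) (gibbs \<beta>S H) \<le> rel_entropy \<Theta> (kron (gibbs \<beta>S H) \<tau>)"
proof -
  define V where "V = mat n n (\<lambda>(a,k). es k $ a)"
  define p where "p = (\<lambda>k. exp (- \<beta>S * E k) / Z)"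
  define \<rho> where "\<rho> = V * rdiag n p * adj V"
  note V = unitary_mat_of_orthonormal(1)[OF es, folded V_def]
  note \<rho> = gibbs_weights_state[OF V n Z_def[THEN meta_eq_to_obj_eq] p_def, folded \<rho>_def]
  have \<tau>: "pos_def_mat m \<tau>" "mtrace \<tau> = 1" unfolding \<tau>_def using pos_def_mat_gibbs mtrace_gibbs HB m by auto
  note \<tau>c = pos_def_mat_carrier[OF \<tau>(1)]
  have \<Theta>_p: "\<Theta> = msum (n * m) n (\<lambda>k. complex_of_real (p k) \<cdot>\<^sub>m (U * kron (proj (es k)) \<tau> * adj U))"
    unfolding \<Theta>_def p_def ..
  also have "\<dots> = U * kron \<rho> \<tau> * adj U"
    unfolding \<rho>_def V_def by (rule msum_evolved_eigenprojections[OF es unitary_matD(1)[OF U] \<tau>(1) m])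
  finally have \<Theta>_eq: "\<Theta> = U * kron \<rho> \<tau> * adj U" .
  have \<Theta>: "pos_def_mat (n * m) \<Theta>"
    unfolding \<Theta>_eq by (rule pos_def_mat_unitary_conj[OF U pos_def_mat_kron[OF \<rho>(1) \<tau>(1) m]])
  have tr\<Theta>: "mtrace \<Theta> = 1"
    unfolding \<Theta>_eq using pos_def_mat_carrier[OF \<rho>(1)] \<tau>c \<rho>(2) \<tau>(2)
    by (simp add: mtrace_unitary_conj[OF U] mtrace_kron[of _ n _ m])
  have Tc: "U * kron (proj (es k)) \<tau> * adj U \<in> carrier_mat (n * m) (n * m)" if "k < n" for k
    using kron_carrier[OF proj_carrier \<tau>c] es that U by (simp add: unitary_matD orthonormal_def)
  have "mtrace (ptrace_B m \<Theta> * H) = (\<Sum>k<n. complex_of_real (p k) * mtrace (H * ptrace_B m (U * kron (proj (es k)) \<tau> * adj U)))"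
    unfolding \<Theta>_p by (rule mtrace_ptrace_msum[OF Tc hermitian_matD(1)[OF H] m])
  then have G: "Re (mtrace (ptrace_B m \<Theta> * H)) = (\<Sum>k<n. p k * E k)" using E by simp
  have "mtrace (\<Theta> * mln \<Theta>) = mtrace (\<rho> * mln \<rho>) + mtrace (\<tau> * mln \<tau>)"
    unfolding \<Theta>_eq by (rule mtrace_mult_mln_unitary_conj_kron[OF U \<rho>(1) \<tau>(1) \<rho>(2) \<tau>(2) m])
  also have "mtrace (\<tau> * mln \<tau>) = - \<beta>B * mtrace (HB * \<tau>) - ln (part_fun \<beta>B HB)"
    unfolding \<tau>_def using \<tau>c \<tau>(2) mtrace_mult_comm[OF hermitian_matD(1)[OF HB] \<tau>c]
    by (simp add: mtrace_mult_mln_gibbs[OF HB m] \<tau>_def)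
  finally have S: "Re (mtrace (\<Theta> * mln \<Theta>))
      = - \<beta>S * (\<Sum>k<n. p k * E k) - ln Z - \<beta>B * Re (mtrace (HB * \<tau>)) - ln (part_fun \<beta>B HB)"
    using \<rho>(3) by simp
  have "Re (mtrace (\<Theta> * mln (kron (gibbs \<beta>S H) \<tau>)))
      = - \<beta>S * Re (mtrace (ptrace_B m \<Theta> * H)) - ln (part_fun \<beta>S H)
        - \<beta>B * Re (mtrace (kron (1\<^sub>m n) HB * \<Theta>)) - ln (part_fun \<beta>B HB)"
    unfolding \<tau>_def mtrace_mult_mln_kron_gibbs[OF H HB pos_def_mat_carrier[OF \<Theta>] tr\<Theta> n m] by simp
  then show "rel_entropy \<Theta> (kron (gibbs \<beta>S H) \<tau>)
      = ln (part_fun \<beta>S H) - ln Z - \<beta>B * (Re (mtrace (HB * \<tau>)) - Re (mtrace (kron (1\<^sub>m n) HB * \<Theta>)))"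
    unfolding rel_entropy_def using S G by (simp add: algebra_simps)
  show "rel_entropy (ptrace_B m \<Theta>) (gibbs \<beta>S H) \<le> rel_entropy \<Theta> (kron (gibbs \<beta>S H) \<tau>)"
    by (rule rel_entropy_ptrace_le[OF \<Theta> pos_def_mat_gibbs[OF H n] \<tau> m])
qed

lemma mean_le_ln_mean_exp:
  fixes P x :: "nat \<Rightarrow> real"
  assumes P0: "\<And>k. k < n \<Longrightarrow> 0 \<le> P k" and P1: "(\<Sum>k<n. P k) = 1"
  shows "(\<Sum>k<n. P k * x k) \<le> ln (\<Sum>k<n. P k * exp (x k))"
proof -
  define c where "c = (\<Sum>k<n. P k * x k)"
  have "(\<Sum>k<n. P k * (exp c * (1 + (x k - c))))
      = exp c * ((\<Sum>k<n. P k) + (\<Sum>k<n. P k * x k) - c * (\<Sum>k<n. P k))"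
    by (simp add: algebra_simps sum.distrib sum_subtractf sum_distrib_left sum_distrib_right)
  then have "exp c = (\<Sum>k<n. P k * (exp c * (1 + (x k - c))))"
    using P1 unfolding c_def by simp
  also have "\<dots> \<le> (\<Sum>k<n. P k * exp (x k))"
  proof (intro sum_mono mult_left_mono)
    fix k assume k: "k \<in> {..<n}"
    have "exp c * (1 + (x k - c)) \<le> exp c * exp (x k - c)"
      by (intro mult_left_mono) (auto simp: exp_ge_add_one_self)
    then show "exp c * (1 + (x k - c)) \<le> exp (x k)" by (simp add: exp_diff)
    show "0 \<le> P k" using P0 k by simp
  qed
  finally have le: "exp c \<le> (\<Sum>k<n. P k * exp (x k))" .
  moreover have "0 < (\<Sum>k<n. P k * exp (x k))" using le exp_gt_zero[of c] by linarith
  ultimately show ?thesis unfolding c_def by (simp add: ln_ge_iff)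
qed

lemma mean_ge_of_exp_mean:
  fixes P W :: "nat \<Rightarrow> real"
  assumes "\<And>k. k < n \<Longrightarrow> 0 \<le> P k" "(\<Sum>k<n. P k) = 1" "0 < \<beta>"
  shows "- ln (\<Sum>k<n. P k * exp (- \<beta> * W k)) / \<beta> \<le> (\<Sum>k<n. P k * W k)"
proof -
  have "- \<beta> * (\<Sum>k<n. P k * W k) \<le> ln (\<Sum>k<n. P k * exp (- \<beta> * W k))"
    using mean_le_ln_mean_exp[OF assms(1,2), of "\<lambda>k. - \<beta> * W k"]
    by (simp add: sum_distrib_left mult.left_commute)
  then show ?thesis using assms(3) by (simp add: field_simps)
qed

lemma sum_boltzmann_exp_work:
  fixes eps E :: "nat \<Rightarrow> real"
  shows "(\<Sum>k<n. exp (- \<beta> * eps k) / Z * exp (- \<beta> * ((E k - eps k) - Q)))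
       = (\<Sum>k<n. exp (- \<beta> * E k)) * exp (\<beta> * Q) / Z"
proof -
  have summand: "exp (- \<beta> * eps k) / Z * exp (- \<beta> * ((E k - eps k) - Q)) = exp (- \<beta> * E k) * exp (\<beta> * Q) / Z" for k
    by (simp add: exp_add[symmetric] algebra_simps)
  show ?thesis by (simp only: summand sum_distrib_right sum_divide_distrib)
qed

theorem theorem1:
  fixes n m :: nat and t \<beta>S \<beta>B :: real
    and HS :: "real \<Rightarrow> complex mat" and HB U :: "complex mat"
    and es :: "nat \<Rightarrow> complex vec" and eps :: "nat \<Rightarrow> real"
    and \<Phi> :: "complex mat \<Rightarrow> complex mat"
    and \<tau>B \<Theta> \<rho>S :: "complex mat"
    and ZS :: "real \<Rightarrow> real" and FS :: "real \<Rightarrow> real"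
    and E :: "nat \<Rightarrow> real" and Zt :: real and Q :: real and W :: "nat \<Rightarrow> real"
  assumes n_pos: "0 < n" and m_pos: "0 < m" and t_nonneg: "0 \<le> t"
    and HS_herm: "\<And>s. s \<in> {0..t} \<Longrightarrow> hermitian_mat n (HS s)"
    and HB_herm: "hermitian_mat m HB"
    and U_unit: "unitary_mat (n * m) U"
    and \<beta>S_pos: "0 < \<beta>S" and \<beta>B_pos: "0 < \<beta>B"
    and es_dim: "\<And>k. k < n \<Longrightarrow> es k \<in> carrier_vec n"
    and es_eig: "\<And>k. k < n \<Longrightarrow> HS 0 *\<^sub>v es k = complex_of_real (eps k) \<cdot>\<^sub>v es k"
    and es_orth: "\<And>k l. k < n \<Longrightarrow> l < n \<Longrightarrow> es k \<bullet>c es l = (if k = l then 1 else 0)"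
  defines "ZS \<equiv> (\<lambda>s. part_fun \<beta>S (HS s))"
    and "FS \<equiv> (\<lambda>s. - ln (ZS s) / \<beta>S)"
    and "\<tau>B \<equiv> gibbs \<beta>B HB"
    and "\<Phi> \<equiv> (\<lambda>\<rho>. ptrace_B m (U * kron \<rho> \<tau>B * adj U))"
    and "E \<equiv> (\<lambda>k. Re (mtrace (HS t * \<Phi> (proj (es k)))))"
    and "Zt \<equiv> (\<Sum>k<n. exp (- \<beta>S * E k))"
    and "\<Theta> \<equiv> msum (n * m) n (\<lambda>k. complex_of_real (exp (- \<beta>S * E k) / Zt) \<cdot>\<^sub>m
                 (U * kron (proj (es k)) \<tau>B * adj U))"
    and "\<rho>S \<equiv> ptrace_B m \<Theta>"
    and "Q \<equiv> Re (mtrace (HB * \<tau>B)) - Re (mtrace (kron (1\<^sub>m n) HB * \<Theta>))"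
    and "W \<equiv> (\<lambda>k. (E k - eps k) - Q)"
  shows "(\<Sum>k<n. exp (- \<beta>S * eps k) / ZS 0 * exp (- \<beta>S * W k))
           = exp (- \<beta>S * (FS t - FS 0)) * exp (- rel_entropy \<Theta> (kron (gibbs \<beta>S (HS t)) \<tau>B))
             * exp (- (\<beta>B - \<beta>S) * Q)
       \<and> (\<Sum>k<n. exp (- \<beta>S * eps k) / ZS 0 * W k)
           \<ge> (FS t - FS 0) + rel_entropy \<rho>S (gibbs \<beta>S (HS t)) / \<beta>S + (\<beta>B - \<beta>S) / \<beta>S * Q"
proof -
  have es: "orthonormal n n es" using es_dim es_orth by (simp add: orthonormal_def)
  have HSt: "hermitian_mat n (HS t)" using HS_herm t_nonneg by simp
  have ZS0: "ZS 0 = (\<Sum>k<n. exp (- \<beta>S * eps k))"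
    using eigenbasis_decomposition[OF _ es es_eig] HS_herm[of 0] t_nonneg
      gibbs_unitary_conj_rdiag(1)[OF unitary_mat_of_orthonormal(1)[OF es]]
    unfolding ZS_def by (simp add: hermitian_mat_def)
  have "E k = Re (mtrace (HS t * ptrace_B m (U * kron (proj (es k)) \<tau>B * adj U)))" for k
    unfolding E_def \<Phi>_def ..
  note mixture = rel_entropy_evolved_gibbs_mixture[where \<beta>S = \<beta>S and \<beta>B = \<beta>B,
      OF es HSt HB_herm U_unit n_pos m_pos \<tau>B_def[THEN meta_eq_to_obj_eq] this,
      folded Zt_def, folded \<Theta>_def, folded \<rho>S_def]
  have D: "rel_entropy \<Theta> (kron (gibbs \<beta>S (HS t)) \<tau>B) = ln (ZS t) - ln Zt - \<beta>B * Q"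
    using mixture(1) unfolding ZS_def Q_def .
  have Z: "0 < ZS 0" "0 < ZS t" "0 < Zt"
    using part_fun_pos[OF HS_herm n_pos] t_nonneg n_pos unfolding ZS_def Zt_def by (auto intro: sum_pos)
  have avg: "(\<Sum>k<n. exp (- \<beta>S * eps k) / ZS 0 * exp (- \<beta>S * W k)) = Zt * exp (\<beta>S * Q) / ZS 0"
    unfolding W_def Zt_def by (rule sum_boltzmann_exp_work)
  have "exp (- \<beta>S * (FS t - FS 0)) * exp (- rel_entropy \<Theta> (kron (gibbs \<beta>S (HS t)) \<tau>B)) * exp (- (\<beta>B - \<beta>S) * Q)
      = exp (ln Zt - ln (ZS 0) + \<beta>S * Q)"
    using \<beta>S_pos unfolding D FS_def by (simp add: exp_add[symmetric] field_simps)
  then have part1: "exp (- \<beta>S * (FS t - FS 0)) * exp (- rel_entropy \<Theta> (kron (gibbs \<beta>S (HS t)) \<tau>B))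
      * exp (- (\<beta>B - \<beta>S) * Q) = (\<Sum>k<n. exp (- \<beta>S * eps k) / ZS 0 * exp (- \<beta>S * W k))"
    unfolding avg using Z by (simp add: exp_add exp_diff)
  have "- ln (\<Sum>k<n. exp (- \<beta>S * eps k) / ZS 0 * exp (- \<beta>S * W k)) / \<beta>S
      \<le> (\<Sum>k<n. exp (- \<beta>S * eps k) / ZS 0 * W k)"
    using Z \<beta>S_pos by (intro mean_ge_of_exp_mean) (auto simp: ZS0 sum_divide_distrib[symmetric])
  then have W: "(ln (ZS 0) - ln Zt - \<beta>S * Q) / \<beta>S \<le> (\<Sum>k<n. exp (- \<beta>S * eps k) / ZS 0 * W k)"
    unfolding avg using Z by (simp add: ln_div ln_mult diff_diff_eq)
  have "(FS t - FS 0) + rel_entropy \<rho>S (gibbs \<beta>S (HS t)) / \<beta>S + (\<beta>B - \<beta>S) / \<beta>S * Q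
      = (ln (ZS 0) - ln (ZS t) + rel_entropy \<rho>S (gibbs \<beta>S (HS t)) + (\<beta>B - \<beta>S) * Q) / \<beta>S"
    using \<beta>S_pos unfolding FS_def by (simp add: field_simps)
  also have "\<dots> \<le> (ln (ZS 0) - ln Zt - \<beta>S * Q) / \<beta>S"
    using mixture(2) \<beta>S_pos unfolding D by (intro divide_right_mono) (auto simp: algebra_simps)
  finally show ?thesis using part1 W by simp
qed

end
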